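(* Let $k$ be a field of characteristic $p>0$. Then the $k$-algebra $$\Lambda=kQ/\big(\beta^{6p+1},\ \alpha\gamma,\ \alpha(\beta+\beta^2)\gamma,\ \alpha\beta^{2p+1}\gamma\big)$$ (which equals $kQ/I(6p+1;6p+1,6p+1;V)$ with $V=(\beta^{6p+1})+k\cdot1+k(\beta+\beta^2)+k\beta^{2p+1}$) has ordinary quiver $Q$, containing the loop $\beta$, and satisfies $\mathrm{HH}^1(\Lambda)=0$.
   Context: $Q$ is the quiver with vertices $1,2,3$ and arrows $\alpha\colon 2\to1$, $\beta\colon 2\to 2$, $\gamma\colon 3\to 2$; $kQ$ is generated by pairwise orthogonal idempotents $e_1,e_2,e_3$ (sum $1$) and $\alpha,\beta,\gamma$ with $e_1\alpha=\alpha=\alpha e_2$, $e_2\beta=\beta=\beta e_2$, $e_3\gamma=\gamma=\gamma e_2$, $\gamma\alpha=\beta\alpha=\gamma\beta=0$; for $v=\sum_iv_i\beta^i\in k[\beta]$, $\alpha v\gamma=\sum_iv_i\alpha\beta^i\gamma$. $I(n;n,n;V)$ is the two-sided ideal generated by $\alpha\beta^n$, $\beta^n$, $\beta^n\gamma$ and all $\alpha v\gamma$, $v\in V$; the displayed ideal is the two-sided ideal generated by the listed elements. $\mathrm{HH}^1(\Lambda)=\mathrm{Der}_k(\Lambda,\Lambda)/\mathrm{Inn}(\Lambda)$. *)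

theory Defs
  imports "HOL-Algebra.QuotRing"
begin

datatype vert = V1 | V2 | V3
datatype arr = Al | Be | Ga

fun src :: "arr \<Rightarrow> vert" where
  "src Al = V2" | "src Be = V2" | "src Ga = V3"
fun tgt :: "arr \<Rightarrow> vert" where
  "tgt Al = V1" | "tgt Be = V2" | "tgt Ga = V2"

text \<open>Paths are written as products in the algebra (right-to-left composition,
  as in e1 alpha = alpha = alpha e2): the word [x1,...,xn] stands for x1 x2 ... xn,
  which is nonzero iff src x_i = tgt x_(i+1).  Triv v is the idempotent e_v.\<close>

datatype qpath = Triv vert | Arrs "arr list"

fun composable :: "arr list \<Rightarrow> bool" where
  "composable [] = True"
| "composable [x] = True"
| "composable (x # y # zs) = (src x = tgt y \<and> composable (y # zs))"

fun valid_path :: "qpath \<Rightarrow> bool" where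
  "valid_path (Triv v) = True"
| "valid_path (Arrs xs) = (xs \<noteq> [] \<and> composable xs)"

fun plen :: "qpath \<Rightarrow> nat" where
  "plen (Triv v) = 0" | "plen (Arrs xs) = length xs"

text \<open>Product of two paths (None means the product is zero).\<close>
fun pathmult :: "qpath \<Rightarrow> qpath \<Rightarrow> qpath option" where
  "pathmult (Triv v) (Triv w) = (if v = w then Some (Triv v) else None)"
| "pathmult (Triv v) (Arrs ys) =
     (if valid_path (Arrs ys) \<and> tgt (hd ys) = v then Some (Arrs ys) else None)"
| "pathmult (Arrs xs) (Triv w) =
     (if valid_path (Arrs xs) \<and> src (last xs) = w then Some (Arrs xs) else None)"
| "pathmult (Arrs xs) (Arrs ys) =
     (if valid_path (Arrs xs) \<and> valid_path (Arrs ys) \<and> src (last xs) = tgt (hd ys)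
      then Some (Arrs (xs @ ys)) else None)"

definition kQ_carrier :: "(qpath \<Rightarrow> 'k::field) set" where
  "kQ_carrier = {a. finite {q. a q \<noteq> 0} \<and> (\<forall>q. a q \<noteq> 0 \<longrightarrow> valid_path q)}"

definition pa_mult :: "(qpath \<Rightarrow> 'k::field) \<Rightarrow> (qpath \<Rightarrow> 'k) \<Rightarrow> qpath \<Rightarrow> 'k" where
  "pa_mult a b = (\<lambda>w. \<Sum>(u, v) \<in> {(u, v). pathmult u v = Some w}. a u * b v)"

definition pbasis :: "qpath \<Rightarrow> qpath \<Rightarrow> 'k::field" where
  "pbasis q = (\<lambda>r. if r = q then 1 else 0)"

definition pa_add :: "(qpath \<Rightarrow> 'k::field) \<Rightarrow> (qpath \<Rightarrow> 'k) \<Rightarrow> qpath \<Rightarrow> 'k" where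
  "pa_add a b = (\<lambda>q. a q + b q)"

definition pa_one :: "qpath \<Rightarrow> 'k::field" where
  "pa_one = pa_add (pa_add (pbasis (Triv V1)) (pbasis (Triv V2))) (pbasis (Triv V3))"

definition pa_smult :: "'k::field \<Rightarrow> (qpath \<Rightarrow> 'k) \<Rightarrow> qpath \<Rightarrow> 'k" where
  "pa_smult c a = (\<lambda>q. c * a q)"

definition kQ :: "(qpath \<Rightarrow> 'k::field) ring" where
  "kQ = \<lparr>carrier = kQ_carrier, mult = pa_mult, one = pa_one,
         zero = (\<lambda>_. 0), add = pa_add\<rparr>"

definition arrow_ideal_pow :: "nat \<Rightarrow> (qpath \<Rightarrow> 'k::field) set" where
  "arrow_ideal_pow m = {a \<in> kQ_carrier. \<forall>q. a q \<noteq> 0 \<longrightarrow> m \<le> plen q}"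

text \<open>An admissible ideal: R^m \<subseteq> I \<subseteq> R^2 for some m \<ge> 2; for such I the ordinary
  (Gabriel) quiver of kQ/I is Q.\<close>
definition admissible :: "(qpath \<Rightarrow> 'k::field) set \<Rightarrow> bool" where
  "admissible I \<longleftrightarrow> ideal I kQ \<and> I \<subseteq> arrow_ideal_pow 2 \<and> (\<exists>m\<ge>2. arrow_ideal_pow m \<subseteq> I)"

definition betapow :: "nat \<Rightarrow> qpath \<Rightarrow> 'k::field" where
  "betapow n = pbasis (Arrs (replicate n Be))"

definition alpha_beta_gamma :: "nat \<Rightarrow> qpath \<Rightarrow> 'k::field" where
  "alpha_beta_gamma n = pbasis (Arrs (Al # replicate n Be @ [Ga]))"

definition Igens :: "nat \<Rightarrow> (qpath \<Rightarrow> 'k::field) set" where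
  "Igens p = {betapow (6*p+1), alpha_beta_gamma 0,
              pa_add (alpha_beta_gamma 1) (alpha_beta_gamma 2), alpha_beta_gamma (2*p+1)}"

definition Iideal :: "nat \<Rightarrow> (qpath \<Rightarrow> 'k::field) set" where
  "Iideal p = genideal kQ (Igens p)"

definition Lambda :: "nat \<Rightarrow> (qpath \<Rightarrow> 'k::field) set ring" where
  "Lambda p = kQ Quot (Iideal p)"

definition Lscalar :: "nat \<Rightarrow> 'k::field \<Rightarrow> (qpath \<Rightarrow> 'k) set" where
  "Lscalar p c = Iideal p +>\<^bsub>kQ\<^esub> pa_smult c pa_one"

text \<open>k-linear derivations of an algebra A, where sc maps scalars into A.\<close>
definition is_derivation :: "('a, 'm) ring_scheme \<Rightarrow> ('k \<Rightarrow> 'a) \<Rightarrow> ('a \<Rightarrow> 'a) \<Rightarrow> bool" where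
  "is_derivation A sc D \<longleftrightarrow>
     D \<in> carrier A \<rightarrow> carrier A \<and>
     (\<forall>x\<in>carrier A. \<forall>y\<in>carrier A. D (x \<oplus>\<^bsub>A\<^esub> y) = D x \<oplus>\<^bsub>A\<^esub> D y) \<and>
     (\<forall>c. \<forall>x\<in>carrier A. D (sc c \<otimes>\<^bsub>A\<^esub> x) = sc c \<otimes>\<^bsub>A\<^esub> D x) \<and>
     (\<forall>x\<in>carrier A. \<forall>y\<in>carrier A.
        D (x \<otimes>\<^bsub>A\<^esub> y) = (D x \<otimes>\<^bsub>A\<^esub> y) \<oplus>\<^bsub>A\<^esub> (x \<otimes>\<^bsub>A\<^esub> D y))"

definition is_inner_derivation :: "('a, 'm) ring_scheme \<Rightarrow> ('a \<Rightarrow> 'a) \<Rightarrow> bool" where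
  "is_inner_derivation A D \<longleftrightarrow>
     (\<exists>y\<in>carrier A. \<forall>x\<in>carrier A. D x = (y \<otimes>\<^bsub>A\<^esub> x) \<ominus>\<^bsub>A\<^esub> (x \<otimes>\<^bsub>A\<^esub> y))"

text \<open>HH^1(A) = Der_k(A,A)/Inn(A) vanishes iff every k-derivation is inner.\<close>
definition HH1_vanishes :: "('a, 'm) ring_scheme \<Rightarrow> ('k \<Rightarrow> 'a) \<Rightarrow> bool" where
  "HH1_vanishes A sc \<longleftrightarrow> (\<forall>D. is_derivation A sc D \<longrightarrow> is_inner_derivation A D)"

end

theory Submission
  imports Defs "HOL-Algebra.Multiplicative_Group"
begin

(* Every path of Q is e_1, e_3 or alpha^l beta^n gamma^r, so kQ has an explicit basis, and
   I is contained in an explicitly described ideal J: this gives admissibility, and it tells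
   which beta-polynomials cannot lie in I.  For a derivation D of Lambda, subtracting an inner
   derivation makes D vanish on the idempotents e_i; then D preserves the corners e_i Lambda e_j,
   so D(alpha) = alpha a(beta), D(beta) = b(beta), D(gamma) = c(beta) gamma.  Applying D to the
   generators of I forces b = 0 and a + c = const modulo beta^(6p+1) (here one uses that
   2p + 1 = 6p + 1 = 1 in k), and then D agrees on the generators with the inner derivation
   of -a(beta) - (a + c)(0) e_3. *)

fun path_tgt :: "qpath \<Rightarrow> vert" where
  "path_tgt (Triv v) = v" | "path_tgt (Arrs xs) = tgt (hd xs)"

fun path_src :: "qpath \<Rightarrow> vert" where
  "path_src (Triv v) = v" | "path_src (Arrs xs) = src (last xs)"

fun path_cat :: "qpath \<Rightarrow> qpath \<Rightarrow> qpath" where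
  "path_cat (Triv v) q = q"
| "path_cat (Arrs xs) (Triv w) = Arrs xs"
| "path_cat (Arrs xs) (Arrs ys) = Arrs (xs @ ys)"

lemma composable_append:
  "composable (xs @ ys) \<longleftrightarrow> composable xs \<and> composable ys \<and>
     (xs \<noteq> [] \<longrightarrow> ys \<noteq> [] \<longrightarrow> src (last xs) = tgt (hd ys))"
proof (induction xs rule: composable.induct)
  case (2 x) then show ?case by (cases ys) auto
qed auto

lemma pathmult_eq_Some_iff:
  "pathmult u v = Some w \<longleftrightarrow>
     valid_path u \<and> valid_path v \<and> path_src u = path_tgt v \<and> w = path_cat u v"
  by (cases u; cases v) auto

lemma valid_path_cat:
  "valid_path u \<Longrightarrow> valid_path v \<Longrightarrow> path_src u = path_tgt v \<Longrightarrow> valid_path (path_cat u v)"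
  by (cases u; cases v) (auto simp: composable_append)

lemma path_tgt_cat:
  "valid_path u \<Longrightarrow> valid_path v \<Longrightarrow> path_src u = path_tgt v \<Longrightarrow>
     path_tgt (path_cat u v) = path_tgt u"
  by (cases u; cases v) auto

lemma path_src_cat:
  "valid_path u \<Longrightarrow> valid_path v \<Longrightarrow> path_src u = path_tgt v \<Longrightarrow>
     path_src (path_cat u v) = path_src v"
  by (cases u; cases v) auto

lemma path_cat_assoc: "path_cat (path_cat u v) z = path_cat u (path_cat v z)"
  by (cases u; cases v; cases z) auto

lemma plen_path_cat: "plen (path_cat u v) = plen u + plen v"
  by (cases u; cases v) auto

lemma UNIV_vert: "(UNIV :: vert set) = {V1, V2, V3}"
  using vert.exhaust by auto

lemma UNIV_arr: "(UNIV :: arr set) = {Al, Be, Ga}"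
  using arr.exhaust by auto

definition paths_upto :: "nat \<Rightarrow> qpath set" where
  "paths_upto n = range Triv \<union> Arrs ` {xs. length xs \<le> n}"

lemma finite_paths_upto: "finite (paths_upto n)"
proof -
  have "finite {xs :: arr list. set xs \<subseteq> UNIV \<and> length xs \<le> n}"
    by (rule finite_lists_length_le) (simp add: UNIV_arr)
  then show ?thesis
    unfolding paths_upto_def by (simp add: UNIV_vert)
qed

lemma in_paths_upto: "plen q \<le> n \<Longrightarrow> q \<in> paths_upto n"
  by (cases q) (auto simp: paths_upto_def)

section \<open>The path algebra is a ring\<close>

definition splits :: "qpath \<Rightarrow> (qpath \<times> qpath) set" where
  "splits w = {(u, v). pathmult u v = Some w}"

lemma finite_splits: "finite (splits w)"
proof -
  have "splits w \<subseteq> paths_upto (plen w) \<times> paths_upto (plen w)"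
    by (auto simp: splits_def pathmult_eq_Some_iff plen_path_cat intro!: in_paths_upto)
  then show ?thesis
    using finite_paths_upto finite_subset by blast
qed

lemma pa_mult_splits: "pa_mult a b w = (\<Sum>(u, v) \<in> splits w. a u * b v)"
  by (simp add: pa_mult_def splits_def)

definition splits3 :: "qpath \<Rightarrow> (qpath \<times> qpath \<times> qpath) set" where
  "splits3 w = {(u, v, z). valid_path u \<and> valid_path v \<and> valid_path z \<and>
     path_src u = path_tgt v \<and> path_src v = path_tgt z \<and> w = path_cat (path_cat u v) z}"

lemma pa_mult_assoc_left:
  "pa_mult (pa_mult a b) c w = (\<Sum>(u, v, z) \<in> splits3 w. a u * b v * c z)"
proof -
  have "pa_mult (pa_mult a b) c w =
        (\<Sum>(x, z) \<in> splits w. (\<Sum>(u, v) \<in> splits x. a u * b v * c z))"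
    by (simp add: pa_mult_splits sum_distrib_right case_prod_beta)
  also have "\<dots> = (\<Sum>((x, z), (u, v)) \<in> Sigma (splits w) (\<lambda>(x, z). splits x). a u * b v * c z)"
    by (simp add: sum.Sigma finite_splits split_def)
  also have "\<dots> = (\<Sum>(u, v, z) \<in> splits3 w. a u * b v * c z)"
    by (rule sum.reindex_bij_witness[where j = "\<lambda>((x, z), (u, v)). (u, v, z)"
          and i = "\<lambda>(u, v, z). ((path_cat u v, z), (u, v))"])
       (auto simp: splits3_def splits_def pathmult_eq_Some_iff valid_path_cat path_src_cat)
  finally show ?thesis .
qed

lemma pa_mult_assoc_right:
  "pa_mult a (pa_mult b c) w = (\<Sum>(u, v, z) \<in> splits3 w. a u * b v * c z)"
proof -
  have "pa_mult a (pa_mult b c) w =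
        (\<Sum>(u, y) \<in> splits w. (\<Sum>(v, z) \<in> splits y. a u * b v * c z))"
    by (simp add: pa_mult_splits sum_distrib_left case_prod_beta mult.assoc)
  also have "\<dots> = (\<Sum>((u, y), (v, z)) \<in> Sigma (splits w) (\<lambda>(u, y). splits y). a u * b v * c z)"
    by (simp add: sum.Sigma finite_splits split_def)
  also have "\<dots> = (\<Sum>(u, v, z) \<in> splits3 w. a u * b v * c z)"
    by (rule sum.reindex_bij_witness[where j = "\<lambda>((u, y), (v, z)). (u, v, z)"
          and i = "\<lambda>(u, v, z). ((u, path_cat v z), (v, z))"])
       (auto simp: splits3_def splits_def pathmult_eq_Some_iff valid_path_cat path_tgt_cat
          path_cat_assoc)
  finally show ?thesis .
qed

lemma pa_mult_assoc: "pa_mult (pa_mult a b) c = pa_mult a (pa_mult b c)"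
  by (rule ext) (simp add: pa_mult_assoc_left pa_mult_assoc_right)

lemma pa_mult_add_left: "pa_mult (pa_add x y) b = pa_add (pa_mult x b) (pa_mult y b)"
  by (rule ext) (simp add: pa_mult_splits pa_add_def distrib_right sum.distrib case_prod_beta)

lemma pa_mult_add_right: "pa_mult b (pa_add x y) = pa_add (pa_mult b x) (pa_mult b y)"
  by (rule ext) (simp add: pa_mult_splits pa_add_def distrib_left sum.distrib case_prod_beta)

lemma pa_mult_smult_left: "pa_mult (pa_smult c a) b = pa_smult c (pa_mult a b)"
  by (rule ext) (simp add: pa_mult_splits pa_smult_def sum_distrib_left case_prod_beta mult.assoc)

lemma pa_mult_smult_right: "pa_mult a (pa_smult c b) = pa_smult c (pa_mult a b)"
  by (rule ext)
     (simp add: pa_mult_splits pa_smult_def sum_distrib_left case_prod_beta mult.left_commute)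

lemma pa_mult_zero_left: "pa_mult (\<lambda>_. 0) b = (\<lambda>_. 0)"
  by (rule ext) (simp add: pa_mult_splits)

lemma pa_mult_zero_right: "pa_mult b (\<lambda>_. 0) = (\<lambda>_. 0)"
  by (rule ext) (simp add: pa_mult_splits)

lemma pa_mult_pbasis_left:
  "pa_mult (pbasis q) b w = (\<Sum>v \<in> {v. pathmult q v = Some w}. b v)"
proof -
  have "pa_mult (pbasis q) b w = (\<Sum>x \<in> splits w. if fst x = q then b (snd x) else 0)"
    by (auto simp: pa_mult_splits pbasis_def case_prod_beta intro!: sum.cong)
  also have "\<dots> = (\<Sum>x \<in> {x \<in> splits w. fst x = q}. b (snd x))"
    by (simp add: sum.inter_filter finite_splits)
  also have "\<dots> = (\<Sum>v \<in> {v. pathmult q v = Some w}. b v)"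
    by (rule sum.reindex_bij_witness[where i = "\<lambda>v. (q, v)" and j = snd]) (auto simp: splits_def)
  finally show ?thesis .
qed

lemma pa_mult_pbasis_right:
  "pa_mult b (pbasis q) w = (\<Sum>u \<in> {u. pathmult u q = Some w}. b u)"
proof -
  have "pa_mult b (pbasis q) w = (\<Sum>x \<in> splits w. if snd x = q then b (fst x) else 0)"
    by (auto simp: pa_mult_splits pbasis_def case_prod_beta intro!: sum.cong)
  also have "\<dots> = (\<Sum>x \<in> {x \<in> splits w. snd x = q}. b (fst x))"
    by (simp add: sum.inter_filter finite_splits)
  also have "\<dots> = (\<Sum>u \<in> {u. pathmult u q = Some w}. b u)"
    by (rule sum.reindex_bij_witness[where i = "\<lambda>u. (u, q)" and j = fst]) (auto simp: splits_def)
  finally show ?thesis .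
qed

lemma pa_mult_Triv_left:
  "pa_mult (pbasis (Triv x)) b w = (if valid_path w \<and> path_tgt w = x then b w else 0)"
proof -
  have "{v. pathmult (Triv x) v = Some w} = (if valid_path w \<and> path_tgt w = x then {w} else {})"
    by (auto simp: pathmult_eq_Some_iff)
  then show ?thesis by (simp add: pa_mult_pbasis_left)
qed

lemma pa_mult_Triv_right:
  "pa_mult b (pbasis (Triv x)) w = (if valid_path w \<and> path_src w = x then b w else 0)"
proof -
  have "pathmult u (Triv x) = Some w \<longleftrightarrow> u = w \<and> valid_path w \<and> path_src w = x" for u
    by (cases u; cases w) (auto split: if_splits)
  then have "{u. pathmult u (Triv x) = Some w}
      = (if valid_path w \<and> path_src w = x then {w} else {})"
    by auto
  then show ?thesis by (simp add: pa_mult_pbasis_right)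
qed

lemma pa_one_mult:
  assumes "b \<in> kQ_carrier" shows "pa_mult pa_one b = b"
proof
  fix w
  show "pa_mult pa_one b w = b w"
    using assms unfolding pa_one_def pa_mult_add_left
    by (cases "path_tgt w") (auto simp: pa_add_def pa_mult_Triv_left kQ_carrier_def)
qed

lemma pa_mult_one:
  assumes "b \<in> kQ_carrier" shows "pa_mult b pa_one = b"
proof
  fix w
  show "pa_mult b pa_one w = b w"
    using assms unfolding pa_one_def pa_mult_add_right
    by (cases "path_src w") (auto simp: pa_add_def pa_mult_Triv_right kQ_carrier_def)
qed

lemma pa_mult_nonzero:
  assumes "pa_mult a b w \<noteq> 0"
  shows "\<exists>u v. pathmult u v = Some w \<and> a u \<noteq> 0 \<and> b v \<noteq> 0"
proof -
  from assms obtain x where "x \<in> splits w" "(case x of (u, v) \<Rightarrow> a u * b v) \<noteq> 0"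
    unfolding pa_mult_splits by (rule sum.not_neutral_contains_not_neutral)
  then show ?thesis by (cases x) (auto simp: splits_def)
qed

lemma pa_mult_closed: "a \<in> kQ_carrier \<Longrightarrow> b \<in> kQ_carrier \<Longrightarrow> pa_mult a b \<in> kQ_carrier"
proof -
  assume ab: "a \<in> kQ_carrier" "b \<in> kQ_carrier"
  have supp: "{w. pa_mult a b w \<noteq> 0} \<subseteq> (\<lambda>(u, v). path_cat u v) ` ({u. a u \<noteq> 0} \<times> {v. b v \<noteq> 0})"
    by (auto simp: pathmult_eq_Some_iff dest!: pa_mult_nonzero)
  have "valid_path w" if "pa_mult a b w \<noteq> 0" for w
    using pa_mult_nonzero[OF that] by (auto simp: pathmult_eq_Some_iff valid_path_cat)
  with supp ab show ?thesis
    unfolding kQ_carrier_def by (auto intro: finite_subset)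
qed

lemma pa_add_closed: "a \<in> kQ_carrier \<Longrightarrow> b \<in> kQ_carrier \<Longrightarrow> pa_add a b \<in> kQ_carrier"
proof -
  have "{q. pa_add a b q \<noteq> 0} \<subseteq> {q. a q \<noteq> 0} \<union> {q. b q \<noteq> 0}"
    by (auto simp: pa_add_def)
  then show "a \<in> kQ_carrier \<Longrightarrow> b \<in> kQ_carrier \<Longrightarrow> ?thesis"
    unfolding kQ_carrier_def by (auto simp: pa_add_def intro: finite_subset)
qed

lemma pa_smult_closed: "a \<in> kQ_carrier \<Longrightarrow> pa_smult c a \<in> kQ_carrier"
  unfolding kQ_carrier_def pa_smult_def by (auto intro: finite_subset[of _ "{q. a q \<noteq> 0}"])

lemma pa_zero_closed: "(\<lambda>_. 0) \<in> kQ_carrier"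
  by (simp add: kQ_carrier_def)

lemma pbasis_closed: "valid_path q \<Longrightarrow> pbasis q \<in> kQ_carrier"
  by (simp add: kQ_carrier_def pbasis_def)

lemma pa_one_closed: "pa_one \<in> kQ_carrier"
  by (simp add: pa_one_def pa_add_closed pbasis_closed)

lemma pa_neg_closed: "a \<in> kQ_carrier \<Longrightarrow> (\<lambda>q. - a q) \<in> kQ_carrier"
  by (simp add: kQ_carrier_def)

lemma kQ_simps [simp]:
  "carrier kQ = kQ_carrier" "mult kQ = pa_mult" "one kQ = pa_one"
  "zero kQ = (\<lambda>_. 0)" "add kQ = pa_add"
  by (simp_all add: kQ_def)

lemma ring_kQ: "ring (kQ :: (qpath \<Rightarrow> 'k::field) ring)"
proof (rule ringI)
  show "abelian_group (kQ :: (qpath \<Rightarrow> 'k) ring)"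
  proof (rule abelian_groupI)
    fix x assume x: "x \<in> carrier (kQ :: (qpath \<Rightarrow> 'k) ring)"
    have "pa_add (\<lambda>q. - x q) x = (\<lambda>_. 0)" by (simp add: pa_add_def)
    with x show "\<exists>y\<in>carrier kQ. y \<oplus>\<^bsub>kQ\<^esub> x = \<zero>\<^bsub>kQ\<^esub>"
      by (intro bexI[of _ "\<lambda>q. - x q"]) (simp_all add: pa_neg_closed)
  qed (simp_all add: pa_add_def add_ac pa_add_closed[unfolded pa_add_def] pa_zero_closed)
  show "monoid (kQ :: (qpath \<Rightarrow> 'k) ring)"
    by (rule monoidI)
       (simp_all add: pa_mult_closed pa_one_closed pa_mult_assoc pa_one_mult pa_mult_one)
qed (simp_all add: pa_mult_add_left pa_mult_add_right)

lemma kQ_a_inv: "a \<in> kQ_carrier \<Longrightarrow> a_inv kQ a = (\<lambda>q. - a q)"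
proof -
  interpret ring kQ by (rule ring_kQ)
  assume a: "a \<in> kQ_carrier"
  show ?thesis
    by (rule minus_equality) (use a in \<open>auto simp: pa_add_def pa_neg_closed\<close>)
qed

lemma kQ_additive_subgroupI:
  assumes "H \<subseteq> kQ_carrier" "(\<lambda>_. 0) \<in> H"
    and "\<And>a b. a \<in> H \<Longrightarrow> b \<in> H \<Longrightarrow> pa_add a b \<in> H"
    and "\<And>a. a \<in> H \<Longrightarrow> (\<lambda>q. - a q) \<in> H"
  shows "subgroup H (add_monoid (kQ :: (qpath \<Rightarrow> 'k::field) ring))"
proof -
  interpret ring "kQ :: (qpath \<Rightarrow> 'k) ring" by (rule ring_kQ)
  show ?thesis
    apply (rule add.subgroupI)
    subgoal using assms(1) by simp
    subgoal using assms(2) by blast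
    subgoal for a
      using assms(1,4) kQ_a_inv[of a] by (auto simp: a_inv_def)
    subgoal using assms(3) by simp
    done
qed

lemma carrier_induct [consumes 1, case_names zero add_basis]:
  assumes x: "x \<in> kQ_carrier" and zero: "P (\<lambda>_. 0)"
    and add_basis: "\<And>y q c. y \<in> kQ_carrier \<Longrightarrow> P y \<Longrightarrow> valid_path q \<Longrightarrow> c \<noteq> 0 \<Longrightarrow>
        y q = 0 \<Longrightarrow> P (pa_add y (pa_smult c (pbasis q)))"
  shows "P x"
proof -
  have "\<forall>x \<in> kQ_carrier. {q. x q \<noteq> 0} \<subseteq> F \<longrightarrow> P x" if "finite F" for F
    using that
  proof (induction F rule: finite_induct)
    case empty
    have "x = (\<lambda>_. 0)" if "{q. x q \<noteq> 0} \<subseteq> {}" for x :: "qpath \<Rightarrow> 'a"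
      using that by auto
    then show ?case using zero by blast
  next
    case (insert q F)
    show ?case
    proof (intro ballI impI)
      fix x :: "qpath \<Rightarrow> 'a" assume x: "x \<in> kQ_carrier" "{q. x q \<noteq> 0} \<subseteq> insert q F"
      define y where "y = x(q := 0)"
      have y: "y \<in> kQ_carrier"
        using x unfolding kQ_carrier_def y_def by (auto intro: finite_subset[of _ "{q. x q \<noteq> 0}"])
      moreover have "{q. y q \<noteq> 0} \<subseteq> F"
        using x(2) by (auto simp: y_def)
      then have "P y"
        using insert.IH y by blast
      moreover have "x = pa_add y (pa_smult (x q) (pbasis q))"
        by (auto simp: y_def pa_add_def pa_smult_def pbasis_def)
      moreover have "x = y" if "x q = 0"
        using that by (auto simp: y_def)
      ultimately show "P x"
        using add_basis[of y q "x q"] x(1) by (cases "x q = 0") (auto simp: kQ_carrier_def y_def)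
    qed
  qed
  then show ?thesis using x by (auto simp: kQ_carrier_def)
qed

lemma pa_mult_smult_one: "b \<in> kQ_carrier \<Longrightarrow> pa_mult (pa_smult c pa_one) b = pa_smult c b"
  by (simp add: pa_mult_smult_left pa_one_mult)

lemma ideal_pa_smult_closed:
  assumes "ideal I (kQ :: (qpath \<Rightarrow> 'k::field) ring)" "a \<in> I"
  shows "pa_smult c a \<in> I"
proof -
  interpret ideal I "kQ :: (qpath \<Rightarrow> 'k) ring" by fact
  have "a \<in> kQ_carrier" using assms(2) a_subset by auto
  then have "pa_smult c a = pa_mult (pa_smult c pa_one) a" by (simp add: pa_mult_smult_one)
  also have "\<dots> \<in> I" using I_l_closed[OF assms(2), of "pa_smult c pa_one"]
    by (simp add: pa_smult_closed pa_one_closed)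
  finally show ?thesis .
qed

lemma ideal_if_support_in:
  assumes I: "ideal I (kQ :: (qpath \<Rightarrow> 'k::field) ring)" and x: "x \<in> kQ_carrier"
  shows "(\<And>q. x q \<noteq> 0 \<Longrightarrow> pbasis q \<in> I) \<Longrightarrow> x \<in> I"
  using x
proof (induction arbitrary: rule: carrier_induct)
  case zero
  show ?case
    using additive_subgroup.zero_closed[OF ideal.axioms(1)[OF I]] by simp
next
  case (add_basis y q c)
  have "pbasis q' \<in> I" if "y q' \<noteq> 0" for q'
    using add_basis.prems[of q'] that \<open>y q = 0\<close>
    by (cases "q' = q") (auto simp: pa_add_def pa_smult_def pbasis_def)
  then have "y \<in> I" by (rule add_basis.IH)
  moreover have "pbasis q \<in> I"
    using add_basis.prems[of q] \<open>c \<noteq> 0\<close> \<open>y q = 0\<close> by (simp add: pa_add_def pa_smult_def pbasis_def)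
  then have "pa_smult c (pbasis q) \<in> I" by (rule ideal_pa_smult_closed[OF I])
  ultimately show ?case
    using additive_subgroup.a_closed[OF ideal.axioms(1)[OF I]] by simp
qed

section \<open>Normal form of paths\<close>

definition std_word :: "bool \<Rightarrow> nat \<Rightarrow> bool \<Rightarrow> arr list" where
  "std_word l n r = (if l then [Al] else []) @ replicate n Be @ (if r then [Ga] else [])"

(* std_path l n r is the path alpha^l beta^n gamma^r, where beta^0 = e_2 *)
definition std_path :: "bool \<Rightarrow> nat \<Rightarrow> bool \<Rightarrow> qpath" where
  "std_path l n r = (if \<not> l \<and> n = 0 \<and> \<not> r then Triv V2 else Arrs (std_word l n r))"

fun path_shape :: "qpath \<Rightarrow> (bool \<times> nat \<times> bool) option" where
  "path_shape (Triv v) = (if v = V2 then Some (False, 0, False) else None)"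
| "path_shape (Arrs xs) =
     (if valid_path (Arrs xs) then Some (hd xs = Al, count_list xs Be, last xs = Ga) else None)"

lemma composable_replicate_Be: "composable (replicate n Be)"
proof (induction n)
  case (Suc n)
  then show ?case by (cases n) auto
qed simp

lemma hd_replicate_append: "hd (replicate n x @ ys) = (if n = 0 then hd ys else x)"
  by (cases n) auto

lemma composable_Al_Cons: "composable (Al # ys) \<longleftrightarrow> (ys = [] \<or> (tgt (hd ys) = V2 \<and> composable ys))"
  by (cases ys) auto

lemma composable_Be_Cons: "composable (Be # ys) \<longleftrightarrow> (ys = [] \<or> (tgt (hd ys) = V2 \<and> composable ys))"
  by (cases ys) auto

lemma composable_replicate_append:
  "composable (replicate n Be @ ys) \<longleftrightarrow> composable ys \<and> (n \<noteq> 0 \<longrightarrow> ys \<noteq> [] \<longrightarrow> tgt (hd ys) = V2)"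
proof (induction n)
  case 0 then show ?case by simp
next
  case (Suc n)
  have "replicate (Suc n) Be @ ys = Be # (replicate n Be @ ys)" by simp
  then show ?case using Suc by (auto simp: composable_Be_Cons hd_replicate_append)
qed

lemma tgt_eq_V2: "x \<noteq> Al \<Longrightarrow> tgt x = V2"
  by (cases x) auto

lemma composable_std_word: "composable (std_word l n r)"
proof -
  define ys where "ys = replicate n Be @ (if r then [Ga] else [])"
  have A: "composable ys"
    by (cases r) (auto simp: ys_def composable_replicate_append composable_replicate_Be)
  have B: "ys \<noteq> [] \<Longrightarrow> tgt (hd ys) = V2"
    by (rule tgt_eq_V2) (use hd_in_set[of ys] in \<open>auto simp: ys_def split: if_splits\<close>)
  have "std_word l n r = (if l then Al # ys else ys)" by (simp add: std_word_def ys_def)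
  then show ?thesis using A B by (auto simp: composable_Al_Cons)
qed

lemma std_word_nonempty: "\<not> (\<not> l \<and> n = 0 \<and> \<not> r) \<Longrightarrow> std_word l n r \<noteq> []"
  by (auto simp: std_word_def)

lemma valid_std_path: "valid_path (std_path l n r)"
  by (auto simp: std_path_def composable_std_word std_word_nonempty)

lemma hd_std_word: "std_word l n r \<noteq> [] \<Longrightarrow> (hd (std_word l n r) = Al) = l"
  by (cases l; cases n; cases r) (auto simp: std_word_def)

lemma last_std_word: "std_word l n r \<noteq> [] \<Longrightarrow> (last (std_word l n r) = Ga) = r"
  by (cases l; cases n; cases r) (auto simp: std_word_def)

lemma count_replicate_Be: "count_list (replicate n Be) Be = n"
  by (induction n) auto

lemma count_std_word: "count_list (std_word l n r) Be = n"
  by (auto simp: std_word_def count_list_append count_replicate_Be)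

lemma path_shape_std_path[simp]: "path_shape (std_path l n r) = Some (l, n, r)"
proof (cases "\<not> l \<and> n = 0 \<and> \<not> r")
  case True
  then show ?thesis by (simp add: std_path_def)
next
  case False
  then have ne: "std_word l n r \<noteq> []" by (rule std_word_nonempty)
  have "valid_path (Arrs (std_word l n r))" using ne composable_std_word by simp
  with False ne show ?thesis
    by (simp add: std_path_def hd_std_word last_std_word count_std_word)
qed

lemma std_path_eq_iff[simp]: "std_path l n r = std_path l' n' r' \<longleftrightarrow> l = l' \<and> n = n' \<and> r = r'"
proof
  assume "std_path l n r = std_path l' n' r'"
  then have "path_shape (std_path l n r) = path_shape (std_path l' n' r')" by (rule arg_cong)
  then show "l = l' \<and> n = n' \<and> r = r'" by (simp only: path_shape_std_path option.inject prod.inject)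
qed simp

lemma src_ne_V1: "src a \<noteq> V1"
  by (cases a) auto

lemma composable_shape:
  "composable xs \<Longrightarrow> xs \<noteq> [] \<Longrightarrow> xs = std_word (hd xs = Al) (count_list xs Be) (last xs = Ga)"
proof (induction xs rule: composable.induct)
  case (2 x)
  then show ?case by (cases x) (auto simp: std_word_def)
next
  case (3 x y zs)
  define c where "c = count_list (y # zs) Be"
  define r where "r = (last (y # zs) = Ga)"
  have junction: "src x = tgt y" using "3.prems"(1) by simp
  then have "y \<noteq> Al" using src_ne_V1[of x] by auto
  then have IH: "y # zs = std_word False c r"
    using 3 unfolding c_def r_def by (metis composable.simps(3) list.distinct(1) list.sel(1))
  have "x \<noteq> Ga" using junction by (cases y) auto
  then consider "x = Al" | "x = Be" by (cases x) auto
  then show ?case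
  proof cases
    case 1
    have "(hd (x # y # zs) = Al) = True" "count_list (x # y # zs) Be = c"
      "(last (x # y # zs) = Ga) = r"
      using 1 by (simp_all add: c_def r_def)
    moreover have "x # y # zs = std_word True c r" using 1 by (simp add: IH std_word_def)
    ultimately show ?thesis by (simp only:)
  next
    case 2
    have "(hd (x # y # zs) = Al) = False" "count_list (x # y # zs) Be = Suc c"
      "(last (x # y # zs) = Ga) = r"
      using 2 by (simp_all add: c_def r_def)
    moreover have "x # y # zs = std_word False (Suc c) r" using 2 by (simp add: IH std_word_def)
    ultimately show ?thesis by (simp only:)
  qed
qed simp

lemma path_shape_SomeD: "path_shape q = Some (l, n, r) \<Longrightarrow> q = std_path l n r"
proof (cases q)
  case (Triv v)
  then show "path_shape q = Some (l, n, r) \<Longrightarrow> q = std_path l n r"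
    by (auto simp: std_path_def split: if_splits)
next
  case (Arrs xs)
  assume d: "path_shape q = Some (l, n, r)"
  with Arrs have v: "xs \<noteq> []" "composable xs"
    and lnr: "l = (hd xs = Al)" "n = count_list xs Be" "r = (last xs = Ga)"
    by (auto split: if_splits)
  have "xs = std_word l n r" using composable_shape[OF v(2) v(1)] lnr by simp
  with Arrs v show ?thesis by (auto simp: std_path_def std_word_def)
qed

lemma path_shape_None: "valid_path q \<Longrightarrow> path_shape q = None \<Longrightarrow> q = Triv V1 \<or> q = Triv V3"
  by (cases q) (auto split: if_splits intro: vert.exhaust)

lemma valid_path_cases [consumes 1, case_names Triv1 Triv3 std]:
  assumes "valid_path q"
  obtains "q = Triv V1" | "q = Triv V3" | l n r where "q = std_path l n r"
proof (cases "path_shape q")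
  case None
  with assms have "q = Triv V1 \<or> q = Triv V3" by (rule path_shape_None)
  then show ?thesis using that by blast
next
  case (Some t)
  then show ?thesis using that by (cases t) (auto dest: path_shape_SomeD)
qed

lemma path_tgt_std_path: "path_tgt (std_path l n r) = (if l then V1 else V2)"
  by (cases l; cases n; cases r) (auto simp: std_path_def std_word_def)

lemma path_src_std_path: "path_src (std_path l n r) = (if r then V3 else V2)"
  by (cases l; cases n; cases r) (auto simp: std_path_def std_word_def)

lemma std_word_append: "std_word l n False @ std_word False m r = std_word l (n + m) r"
  by (simp add: std_word_def replicate_add)

lemma path_cat_std_path: "path_cat (std_path l n False) (std_path False m r) = std_path l (n + m) r"
proof -
  consider "\<not> l \<and> n = 0" | "m = 0 \<and> \<not> r" | "\<not> (\<not> l \<and> n = 0)" "\<not> (m = 0 \<and> \<not> r)" by blast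
  then show ?thesis
  proof cases
    case 1 then show ?thesis by (simp add: std_path_def)
  next
    case 2 then show ?thesis by (cases "\<not> l \<and> n = 0") (simp_all add: std_path_def)
  next
    case 3 then show ?thesis by (auto simp: std_path_def std_word_append)
  qed
qed

lemma path_cat_Triv3: "path_cat (std_path l n True) (Triv v) = std_path l n True"
  by (simp add: std_path_def)

lemma valid_path_tgt_V2: "valid_path v \<Longrightarrow> path_tgt v = V2 \<Longrightarrow> \<exists>m r. v = std_path False m r"
  by (erule valid_path_cases) (auto simp: path_tgt_std_path split: if_splits)

lemma valid_path_src_V2: "valid_path v \<Longrightarrow> path_src v = V2 \<Longrightarrow> \<exists>l m. v = std_path l m False"
  by (erule valid_path_cases) (auto simp: path_src_std_path split: if_splits)

lemma valid_path_tgt_V3: "valid_path v \<Longrightarrow> path_tgt v = V3 \<Longrightarrow> v = Triv V3"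
  by (erule valid_path_cases) (auto simp: path_tgt_std_path split: if_splits)

lemma valid_path_src_V1: "valid_path v \<Longrightarrow> path_src v = V1 \<Longrightarrow> v = Triv V1"
  by (erule valid_path_cases) (auto simp: path_src_std_path split: if_splits)

lemma pathmult_std_left_iff:
  "pathmult (std_path l0 n0 False) v = Some w
      \<longleftrightarrow> (\<exists>m r. v = std_path False m r \<and> w = std_path l0 (n0 + m) r)"
proof
  assume h: "pathmult (std_path l0 n0 False) v = Some w"
  then have "valid_path v" "path_tgt v = V2" "w = path_cat (std_path l0 n0 False) v"
    by (simp_all add: pathmult_eq_Some_iff path_src_std_path)
  then obtain m r where "v = std_path False m r" using valid_path_tgt_V2 by blast
  with \<open>w = path_cat (std_path l0 n0 False) v\<close> show "\<exists>m r. v = std_path False m r \<and> w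
      = std_path l0 (n0 + m) r"
    by (auto simp: path_cat_std_path)
next
  assume "\<exists>m r. v = std_path False m r \<and> w = std_path l0 (n0 + m) r"
  then obtain m r where "v = std_path False m r" "w = std_path l0 (n0 + m) r" by blast
  then show "pathmult (std_path l0 n0 False) v = Some w"
    by (simp add: pathmult_eq_Some_iff valid_std_path path_src_std_path path_tgt_std_path
      path_cat_std_path)
qed

lemma pathmult_std_right_iff:
  "pathmult u (std_path False n0 r0) = Some w
      \<longleftrightarrow> (\<exists>l m. u = std_path l m False \<and> w = std_path l (m + n0) r0)"
proof
  assume h: "pathmult u (std_path False n0 r0) = Some w"
  then have "valid_path u" "path_src u = V2" "w = path_cat u (std_path False n0 r0)"
    by (simp_all add: pathmult_eq_Some_iff path_tgt_std_path)
  then obtain l m where "u = std_path l m False" using valid_path_src_V2 by blast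
  with \<open>w = path_cat u (std_path False n0 r0)\<close> show "\<exists>l m. u = std_path l m False \<and> w
      = std_path l (m + n0) r0"
    by (auto simp: path_cat_std_path)
next
  assume "\<exists>l m. u = std_path l m False \<and> w = std_path l (m + n0) r0"
  then obtain l m where "u = std_path l m False" "w = std_path l (m + n0) r0" by blast
  then show "pathmult u (std_path False n0 r0) = Some w"
    by (simp add: pathmult_eq_Some_iff valid_std_path path_src_std_path path_tgt_std_path
      path_cat_std_path)
qed

lemma pa_mult_std_left:
  "pa_mult (pbasis (std_path l0 n0 False)) x w =
     (case path_shape w of None \<Rightarrow> 0
       | Some (l, n, r) \<Rightarrow> if l = l0 \<and> n0 \<le> n then x (std_path False (n - n0) r) else 0)"
proof (cases "path_shape w")
  case None
  then have "{v. pathmult (std_path l0 n0 False) v = Some w} = {}"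
    by (auto simp: pathmult_std_left_iff)
  then show ?thesis using None by (simp add: pa_mult_pbasis_left)
next
  case (Some t)
  then obtain l n r where t: "path_shape w = Some (l, n, r)" by (cases t) auto
  then have w: "w = std_path l n r" by (rule path_shape_SomeD)
  have "{v. pathmult (std_path l0 n0 False) v = Some w}
      = (if l = l0 \<and> n0 \<le> n then {std_path False (n - n0) r} else {})"
    using w by (auto simp: pathmult_std_left_iff)
  then show ?thesis using t by (simp add: pa_mult_pbasis_left)
qed

lemma pa_mult_std_right:
  "pa_mult x (pbasis (std_path False n0 r0)) w =
     (case path_shape w of None \<Rightarrow> 0
       | Some (l, n, r) \<Rightarrow> if r = r0 \<and> n0 \<le> n then x (std_path l (n - n0) False) else 0)"
proof (cases "path_shape w")
  case None
  then have "{u. pathmult u (std_path False n0 r0) = Some w} = {}"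
    by (auto simp: pathmult_std_right_iff)
  then show ?thesis using None by (simp add: pa_mult_pbasis_right)
next
  case (Some t)
  then obtain l n r where t: "path_shape w = Some (l, n, r)" by (cases t) auto
  then have w: "w = std_path l n r" by (rule path_shape_SomeD)
  have "{u. pathmult u (std_path False n0 r0) = Some w}
      = (if r = r0 \<and> n0 \<le> n then {std_path l (n - n0) False} else {})"
    using w by (auto simp: pathmult_std_right_iff)
  then show ?thesis using t by (simp add: pa_mult_pbasis_right)
qed

lemma pathmult_std_gamma_left_iff:
  "pathmult (std_path l0 n0 True) v = Some w \<longleftrightarrow> v = Triv V3 \<and> w = std_path l0 n0 True"
proof
  assume h: "pathmult (std_path l0 n0 True) v = Some w"
  then have "valid_path v" "path_tgt v = V3" "w = path_cat (std_path l0 n0 True) v"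
    by (simp_all add: pathmult_eq_Some_iff path_src_std_path)
  then show "v = Triv V3 \<and> w = std_path l0 n0 True"
    using valid_path_tgt_V3 path_cat_Triv3 by metis
next
  assume "v = Triv V3 \<and> w = std_path l0 n0 True"
  then show "pathmult (std_path l0 n0 True) v = Some w"
    by (simp add: pathmult_eq_Some_iff valid_std_path path_src_std_path path_cat_Triv3)
qed

lemma pathmult_std_alpha_right_iff:
  "pathmult u (std_path True n0 r0) = Some w \<longleftrightarrow> u = Triv V1 \<and> w = std_path True n0 r0"
proof
  assume h: "pathmult u (std_path True n0 r0) = Some w"
  then have "valid_path u" "path_src u = V1" "w = path_cat u (std_path True n0 r0)"
    by (simp_all add: pathmult_eq_Some_iff path_tgt_std_path)
  then show "u = Triv V1 \<and> w = std_path True n0 r0"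
    using valid_path_src_V1 path_cat.simps(1) by metis
next
  assume "u = Triv V1 \<and> w = std_path True n0 r0"
  then show "pathmult u (std_path True n0 r0) = Some w"
    by (simp add: pathmult_eq_Some_iff valid_std_path path_tgt_std_path)
qed

lemma pa_mult_std_gamma_left:
  "pa_mult (pbasis (std_path l0 n0 True)) x w
      = (if w = std_path l0 n0 True then x (Triv V3) else 0)"
proof -
  have "{v. pathmult (std_path l0 n0 True) v = Some w}
      = (if w = std_path l0 n0 True then {Triv V3} else {})"
    by (simp add: pathmult_std_gamma_left_iff)
  then show ?thesis by (simp add: pa_mult_pbasis_left)
qed

lemma pa_mult_std_alpha_right:
  "pa_mult x (pbasis (std_path True n0 r0)) w
      = (if w = std_path True n0 r0 then x (Triv V1) else 0)"
proof -
  have "{u. pathmult u (std_path True n0 r0) = Some w}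
      = (if w = std_path True n0 r0 then {Triv V1} else {})"
    by (simp add: pathmult_std_alpha_right_iff)
  then show ?thesis by (simp add: pa_mult_pbasis_right)
qed

(* bpoly l r f is alpha^l f(beta) gamma^r for the polynomial f with coefficient sequence f *)
definition bpoly :: "bool \<Rightarrow> bool \<Rightarrow> (nat \<Rightarrow> 'k::field) \<Rightarrow> qpath \<Rightarrow> 'k" where
  "bpoly l r f q = (case path_shape q of None \<Rightarrow> 0
      | Some (l', n, r') \<Rightarrow> if l' = l \<and> r' = r then f n else 0)"

(* seq_shift m f is the coefficient sequence of beta^m f(beta) *)
definition seq_shift :: "nat \<Rightarrow> (nat \<Rightarrow> 'k::field) \<Rightarrow> nat \<Rightarrow> 'k" where
  "seq_shift m f n = (if m \<le> n then f (n - m) else 0)"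

definition kdelta :: "nat \<Rightarrow> nat \<Rightarrow> 'k::field" where
  "kdelta n m = (if m = n then 1 else 0)"

definition fin_supp :: "(nat \<Rightarrow> 'k::field) \<Rightarrow> bool" where
  "fin_supp f \<longleftrightarrow> finite {n. f n \<noteq> 0}"

lemma bpoly_std_path[simp]: "bpoly l r f (std_path l' n r') = (if l' = l \<and> r' = r then f n else 0)"
  by (simp add: bpoly_def)

lemma bpoly_Triv1[simp]: "bpoly l r f (Triv V1) = 0"
  by (simp add: bpoly_def)
lemma bpoly_Triv3[simp]: "bpoly l r f (Triv V3) = 0"
  by (simp add: bpoly_def)

lemma bpoly_zero [simp]: "bpoly l r (\<lambda>_. 0) = (\<lambda>_. 0)"
  by (rule ext) (simp add: bpoly_def split: option.splits)

lemma bpoly_closed: "fin_supp f \<Longrightarrow> bpoly l r f \<in> kQ_carrier"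
proof -
  assume f: "fin_supp f"
  have "{q. bpoly l r f q \<noteq> 0} \<subseteq> (\<lambda>n. std_path l n r) ` {n. f n \<noteq> 0}"
  proof
    fix q assume "q \<in> {q. bpoly l r f q \<noteq> 0}"
    then obtain l' n r' where "path_shape q = Some (l', n, r')" and "l' = l \<and> r' = r \<and> f n \<noteq> 0"
      by (auto simp: bpoly_def split: option.splits if_splits)
    then show "q \<in> (\<lambda>n. std_path l n r) ` {n. f n \<noteq> 0}" by (auto dest: path_shape_SomeD)
  qed
  moreover have "bpoly l r f q \<noteq> 0 \<Longrightarrow> valid_path q" for q
    by (auto simp: bpoly_def split: option.splits if_splits dest!: path_shape_SomeD intro:
      valid_std_path)
  ultimately show ?thesis using f unfolding kQ_carrier_def fin_supp_def
    by (auto intro: finite_subset)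
qed

lemma pbasis_std_path: "pbasis (std_path l n r) = bpoly l r (kdelta n)"
proof (rule ext)
  fix w
  show "pbasis (std_path l n r) w = bpoly l r (kdelta n) w"
  proof (cases "path_shape w")
    case None
    then have "w \<noteq> std_path l n r" by auto
    then show ?thesis using None by (simp add: pbasis_def bpoly_def)
  next
    case (Some t)
    then obtain l' n' r' where "path_shape w = Some (l', n', r')" by (cases t) auto
    then have "w = std_path l' n' r'" by (rule path_shape_SomeD)
    then show ?thesis by (auto simp: pbasis_def kdelta_def)
  qed
qed

lemma fin_supp_kdelta: "fin_supp (kdelta n)"
  by (simp add: fin_supp_def kdelta_def)

lemma fin_supp_shift: "fin_supp f \<Longrightarrow> fin_supp (seq_shift m f)"
proof -
  assume "fin_supp f"
  moreover have "{n. seq_shift m f n \<noteq> 0} \<subseteq> (\<lambda>n. n + m) ` {n. f n \<noteq> 0}"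
    by (auto simp: seq_shift_def image_iff intro!: exI[of _ "_ - m"] split: if_splits)
  ultimately show ?thesis unfolding fin_supp_def by (auto intro: finite_subset)
qed

lemma fin_supp_add: "fin_supp f \<Longrightarrow> fin_supp g \<Longrightarrow> fin_supp (\<lambda>n. f n + g n)"
  unfolding fin_supp_def by (rule finite_subset[of _ "{n. f n \<noteq> 0} \<union> {n. g n \<noteq> 0}"]) auto

lemma fin_supp_scale: "fin_supp f \<Longrightarrow> fin_supp (\<lambda>n. c * f n)"
  unfolding fin_supp_def by (rule finite_subset[of _ "{n. f n \<noteq> 0}"]) auto

lemma fin_supp_neg: "fin_supp f \<Longrightarrow> fin_supp (\<lambda>n. - f n)"
  unfolding fin_supp_def by simp

lemma seq_shift_0[simp]: "seq_shift 0 f = f"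
  by (rule ext) (simp add: seq_shift_def)

lemma seq_shift_kdelta: "seq_shift m (kdelta n) = kdelta (m + n)"
  by (rule ext) (auto simp: seq_shift_def kdelta_def)

lemma bpoly_add: "pa_add (bpoly l r f) (bpoly l r g) = bpoly l r (\<lambda>n. f n + g n)"
  by (rule ext) (simp add: pa_add_def bpoly_def split: option.splits)

lemma path_tgt_shape: "path_shape w = Some (l, n, r) \<Longrightarrow> path_tgt w = (if l then V1 else V2)"
  by (auto dest!: path_shape_SomeD simp: path_tgt_std_path)
lemma path_src_shape: "path_shape w = Some (l, n, r) \<Longrightarrow> path_src w = (if r then V3 else V2)"
  by (auto dest!: path_shape_SomeD simp: path_src_std_path)
lemma valid_path_shape: "path_shape w = Some t \<Longrightarrow> valid_path w"
  by (cases t) (auto dest!: path_shape_SomeD simp: valid_std_path)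

lemma std_mult_bpoly:
  "pa_mult (pbasis (std_path l0 n0 False)) (bpoly l r f)
      = (if l then (\<lambda>_. 0) else bpoly l0 r (seq_shift n0 f))"
  by (rule ext) (auto simp: pa_mult_std_left bpoly_def seq_shift_def split: option.splits)

lemma bpoly_mult_std:
  "pa_mult (bpoly l r f) (pbasis (std_path False n0 r0))
      = (if r then (\<lambda>_. 0) else bpoly l r0 (seq_shift n0 f))"
  by (rule ext) (auto simp: pa_mult_std_right bpoly_def seq_shift_def split: option.splits)

lemma pbasis_mult_std_path:
  "pa_mult (pbasis (std_path l n False)) (pbasis (std_path False m r)) =
     pbasis (std_path l (n + m) r)"
  unfolding pbasis_std_path[of False m r] pbasis_std_path[of l "n + m" r]
  by (simp add: std_mult_bpoly seq_shift_kdelta)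

lemma std_gamma_mult_bpoly:
  "pa_mult (pbasis (std_path l0 n0 True)) (bpoly l r f) = (\<lambda>_. 0)"
  by (rule ext) (simp add: pa_mult_std_gamma_left)

lemma bpoly_mult_std_alpha:
  "pa_mult (bpoly l r f) (pbasis (std_path True n0 r0)) = (\<lambda>_. 0)"
  by (rule ext) (simp add: pa_mult_std_alpha_right)

lemma e1_mult_bpoly:
  "pa_mult (pbasis (Triv V1)) (bpoly l r f) = (if l then bpoly l r f else (\<lambda>_. 0))"
  by (rule ext) (auto simp: pa_mult_Triv_left bpoly_def path_tgt_shape dest: valid_path_shape
    split: option.splits)
lemma e3_mult_bpoly:
  "pa_mult (pbasis (Triv V3)) (bpoly l r f) = (\<lambda>_. 0)"
  by (rule ext) (auto simp: pa_mult_Triv_left bpoly_def path_tgt_shape dest: valid_path_shape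
    split: option.splits)
lemma bpoly_mult_e3:
  "pa_mult (bpoly l r f) (pbasis (Triv V3)) = (if r then bpoly l r f else (\<lambda>_. 0))"
  by (rule ext) (auto simp: pa_mult_Triv_right bpoly_def path_src_shape dest: valid_path_shape
    split: option.splits)
lemma bpoly_mult_e1:
  "pa_mult (bpoly l r f) (pbasis (Triv V1)) = (\<lambda>_. 0)"
  by (rule ext) (auto simp: pa_mult_Triv_right bpoly_def path_src_shape dest: valid_path_shape
    split: option.splits)

lemma Triv2_eq_std_path: "Triv V2 = std_path False 0 False"
  by (simp add: std_path_def)

lemma corner_bpoly:
  assumes x: "x \<in> kQ_carrier"
  shows "pa_mult (pa_mult (pbasis (Triv (if l then V1 else V2))) x) (pbasis (Triv (if r
      then V3 else V2)))
         = bpoly l r (\<lambda>n. x (std_path l n r))"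
proof (rule ext)
  fix w
  show "pa_mult (pa_mult (pbasis (Triv (if l then V1 else V2))) x) (pbasis (Triv (if r
      then V3 else V2))) w
         = bpoly l r (\<lambda>n. x (std_path l n r)) w"
  proof (cases "path_shape w")
    case None
    then show ?thesis using x
      by (cases "valid_path w")
         (auto simp: pa_mult_Triv_right pa_mult_Triv_left bpoly_def kQ_carrier_def
               dest!: path_shape_None split: if_splits)
  next
    case (Some t)
    then obtain l' n' r' where d: "path_shape w = Some (l', n', r')" by (cases t) auto
    then have "w = std_path l' n' r'" by (rule path_shape_SomeD)
    then show ?thesis using d
      by (auto simp: pa_mult_Triv_right pa_mult_Triv_left valid_std_path path_tgt_std_path
        path_src_std_path)
  qed
qed

section \<open>An explicit ideal containing I\<close>

(* in_V p g: the polynomial sum g_i beta^i lies in V = span {1, beta + beta^2, beta^(2p+1)}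
   modulo beta^(6p+1) *)
definition in_V :: "nat \<Rightarrow> (nat \<Rightarrow> 'k::field) \<Rightarrow> bool" where
  "in_V p g \<longleftrightarrow> (\<forall>i<6*p+1. i \<noteq> 0 \<and> i \<noteq> 1 \<and> i \<noteq> 2 \<and> i \<noteq> 2*p+1 \<longrightarrow> g i = 0) \<and> g 1 = g 2"

definition J :: "nat \<Rightarrow> (qpath \<Rightarrow> 'k::field) set" where
  "J p = {a \<in> kQ_carrier. a (Triv V1) = 0 \<and> a (Triv V3) = 0 \<and>
      (\<forall>l n r. n < 6*p+1 \<and> \<not> (l \<and> r) \<longrightarrow> a (std_path l n r) = 0) \<and>
      in_V p (\<lambda>n. a (std_path True n True))}"

lemma in_V_if_low_zero: "p > 0 \<Longrightarrow> (\<And>i. i < 6*p+1 \<Longrightarrow> g i = 0) \<Longrightarrow> in_V p g"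
  unfolding in_V_def by auto

lemma in_V_add: "in_V p f \<Longrightarrow> in_V p g \<Longrightarrow> in_V p (\<lambda>n. f n + g n)"
  unfolding in_V_def by auto

lemma in_V_scale: "in_V p f \<Longrightarrow> in_V p (\<lambda>n. c * f n)"
  unfolding in_V_def by auto

lemma J_zero: "p > 0 \<Longrightarrow> (\<lambda>_. 0) \<in> J p"
  by (auto simp: J_def pa_zero_closed intro: in_V_if_low_zero)

lemma J_add: "a \<in> J p \<Longrightarrow> b \<in> J p \<Longrightarrow> pa_add a b \<in> J p"
proof -
  assume a: "a \<in> J p" and b: "b \<in> J p"
  have "(\<lambda>q. a q + b q) \<in> kQ_carrier"
    using pa_add_closed[of a b] a b by (simp add: J_def pa_add_def)
  then show ?thesis using a b unfolding J_def by (auto simp: pa_add_def intro: in_V_add)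
qed

lemma J_smult: "a \<in> J p \<Longrightarrow> pa_smult c a \<in> J p"
proof -
  assume a: "a \<in> J p"
  have "(\<lambda>q. c * a q) \<in> kQ_carrier"
    using pa_smult_closed[of a c] a by (simp add: J_def pa_smult_def)
  then show ?thesis using a unfolding J_def by (auto simp: pa_smult_def intro: in_V_scale)
qed

lemma J_neg: "a \<in> J p \<Longrightarrow> (\<lambda>q. - a q) \<in> J p"
proof -
  assume "a \<in> J p"
  then have "pa_smult (-1) a \<in> J p" by (rule J_smult)
  then show ?thesis by (simp add: pa_smult_def)
qed

lemma J_subset_carrier: "J p \<subseteq> kQ_carrier"
  by (auto simp: J_def)

lemma J_restrict:
  assumes a: "a \<in> J p" and P: "\<And>n. P (std_path True n True) = b"
  shows "(\<lambda>w. if P w then a w else 0) \<in> J p"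
proof -
  have c: "a \<in> kQ_carrier" using a by (simp add: J_def)
  have "(\<lambda>w. if P w then a w else 0) \<in> kQ_carrier"
    using c unfolding kQ_carrier_def by (auto intro: finite_subset[of _ "{q. a q \<noteq> 0}"])
  moreover have "in_V p (\<lambda>n. if P (std_path True n True) then a (std_path True n True) else 0)"
    using a P unfolding J_def in_V_def by (cases b) auto
  ultimately show ?thesis using a unfolding J_def by auto
qed

lemma J_Triv_mult:
  assumes a: "a \<in> J p"
  shows "pa_mult (pbasis (Triv v)) a \<in> J p"
proof -
  have "pa_mult (pbasis (Triv v)) a = (\<lambda>w. if valid_path w \<and> path_tgt w = v then a w else 0)"
    by (rule ext) (simp add: pa_mult_Triv_left)
  then show ?thesis
    using J_restrict[OF a, of "\<lambda>w. valid_path w \<and> path_tgt w = v" "V1 = v"]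
    by (simp add: valid_std_path path_tgt_std_path)
qed

lemma J_mult_Triv:
  assumes a: "a \<in> J p"
  shows "pa_mult a (pbasis (Triv v)) \<in> J p"
proof -
  have "pa_mult a (pbasis (Triv v)) = (\<lambda>w. if valid_path w \<and> path_src w = v then a w else 0)"
    by (rule ext) (simp add: pa_mult_Triv_right)
  then show ?thesis
    using J_restrict[OF a, of "\<lambda>w. valid_path w \<and> path_src w = v" "V3 = v"]
    by (simp add: valid_std_path path_src_std_path)
qed

lemma J_std_path_mult:
  assumes p: "p > 0" and a: "a \<in> J p"
  shows "pa_mult (pbasis (std_path l0 n0 r0)) a \<in> J p"
proof (cases r0)
  case True
  have "pa_mult (pbasis (std_path l0 n0 r0)) a = (\<lambda>_. 0)"
    using a True by (auto simp: pa_mult_std_gamma_left J_def)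
  then show ?thesis using J_zero[OF p] by simp
next
  case False
  let ?b = "pa_mult (pbasis (std_path l0 n0 r0)) a"
  have "?b \<in> kQ_carrier"
    using a by (simp add: J_def pa_mult_closed pbasis_closed valid_std_path)
  moreover have "?b (std_path l n r) = 0" if "n < 6*p+1" for l n r
    using a that False by (auto simp: pa_mult_std_left J_def)
  moreover have "?b (Triv V1) = 0" "?b (Triv V3) = 0"
    using False by (simp_all add: pa_mult_std_left)
  ultimately show ?thesis
    unfolding J_def by (auto intro!: in_V_if_low_zero[OF p])
qed

lemma J_mult_std_path:
  assumes p: "p > 0" and a: "a \<in> J p"
  shows "pa_mult a (pbasis (std_path l0 n0 r0)) \<in> J p"
proof (cases l0)
  case True
  have "pa_mult a (pbasis (std_path l0 n0 r0)) = (\<lambda>_. 0)"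
    using a True by (auto simp: pa_mult_std_alpha_right J_def)
  then show ?thesis using J_zero[OF p] by simp
next
  case False
  let ?b = "pa_mult a (pbasis (std_path l0 n0 r0))"
  have "?b \<in> kQ_carrier"
    using a by (simp add: J_def pa_mult_closed pbasis_closed valid_std_path)
  moreover have "?b (std_path l n r) = 0" if "n < 6*p+1" for l n r
    using a that False by (auto simp: pa_mult_std_right J_def)
  moreover have "?b (Triv V1) = 0" "?b (Triv V3) = 0"
    using False by (simp_all add: pa_mult_std_right)
  ultimately show ?thesis
    unfolding J_def by (auto intro!: in_V_if_low_zero[OF p])
qed

lemma J_pbasis_mult:
  assumes "p > 0" "a \<in> J p" "valid_path q"
  shows "pa_mult (pbasis q) a \<in> J p"
  using assms(3) by (cases rule: valid_path_cases) (simp_all add: J_Triv_mult J_std_path_mult assms)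

lemma J_mult_pbasis:
  assumes "p > 0" "a \<in> J p" "valid_path q"
  shows "pa_mult a (pbasis q) \<in> J p"
  using assms(3) by (cases rule: valid_path_cases) (simp_all add: J_mult_Triv J_mult_std_path assms)

lemma ideal_J: "p > 0 \<Longrightarrow> ideal (J p :: (qpath \<Rightarrow> 'k::field) set) kQ"
proof -
  assume p: "p > 0"
  show ?thesis
  proof (rule idealI[OF ring_kQ])
    show "subgroup (J p) (add_monoid (kQ :: (qpath \<Rightarrow> 'k::field) ring))"
      by (rule kQ_additive_subgroupI) (auto simp: J_subset_carrier J_zero[OF p] J_add J_neg)
  next
    fix a x assume a: "a \<in> (J p :: (qpath \<Rightarrow> 'k::field) set)"
      and x: "x \<in> carrier (kQ :: (qpath \<Rightarrow> 'k::field) ring)"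
    have "pa_mult x a \<in> J p"
    proof (rule carrier_induct[of x "\<lambda>x. pa_mult x a \<in> J p"])
      show "x \<in> kQ_carrier" using x by simp
      show "pa_mult (\<lambda>_. 0) a \<in> J p" by (simp add: pa_mult_zero_left J_zero[OF p])
    next
      fix y q c assume "pa_mult y a \<in> J p" "valid_path q"
      then show "pa_mult (pa_add y (pa_smult c (pbasis q))) a \<in> J p"
        by (simp add: pa_mult_add_left pa_mult_smult_left J_add J_smult J_pbasis_mult[OF p a])
    qed
    then show "x \<otimes>\<^bsub>kQ\<^esub> a \<in> J p" by simp
    have "pa_mult a x \<in> J p"
    proof (rule carrier_induct[of x "\<lambda>x. pa_mult a x \<in> J p"])
      show "x \<in> kQ_carrier" using x by simp
      show "pa_mult a (\<lambda>_. 0) \<in> J p" by (simp add: pa_mult_zero_right J_zero[OF p])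
    next
      fix y q c assume "pa_mult a y \<in> J p" "valid_path q"
      then show "pa_mult a (pa_add y (pa_smult c (pbasis q))) \<in> J p"
        by (simp add: pa_mult_add_right pa_mult_smult_right J_add J_smult J_mult_pbasis[OF p a])
    qed
    then show "a \<otimes>\<^bsub>kQ\<^esub> x \<in> J p" by simp
  qed
qed

section \<open>Admissibility of I\<close>

lemma betapow_eq_pbasis: "n > 0 \<Longrightarrow> betapow n = pbasis (std_path False n False)"
  by (simp add: betapow_def std_path_def std_word_def)

lemma alpha_beta_gamma_eq_pbasis: "alpha_beta_gamma n = pbasis (std_path True n True)"
  by (simp add: alpha_beta_gamma_def std_path_def std_word_def)

lemma pbasis_std_path_apply:
  "pbasis (std_path l n r) (std_path l' n' r') = (if l' = l \<and> n' = n \<and> r' = r then 1 else 0)"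
  by (auto simp: pbasis_def)

lemma pbasis_std_path_Triv:
  "pbasis (std_path l n r) (Triv V1) = 0" "pbasis (std_path l n r) (Triv V3) = 0"
  by (auto simp: pbasis_def std_path_def)

lemma betapow_eq_pbasis_6p1: "betapow (6*p+1) = pbasis (std_path False (6*p+1) False)"
  by (rule betapow_eq_pbasis) simp

lemma Igens_subset_carrier: "Igens p \<subseteq> kQ_carrier"
  unfolding Igens_def betapow_eq_pbasis_6p1 alpha_beta_gamma_eq_pbasis
  by (auto simp: pbasis_closed valid_std_path pa_add_closed simp del: One_nat_def)

lemma Igens_subset_J: "p > 0 \<Longrightarrow> (Igens p :: (qpath \<Rightarrow> 'k::field) set) \<subseteq> J p"
proof -
  assume p: "p > 0"
  have b: "betapow (6*p+1) \<in> (J p :: (qpath \<Rightarrow> 'k::field) set)"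
    unfolding betapow_eq_pbasis_6p1 J_def
    by (auto simp: pbasis_closed valid_std_path pbasis_std_path_apply pbasis_std_path_Triv
      intro!: in_V_if_low_zero[OF p])
  have g: "alpha_beta_gamma n \<in> (J p :: (qpath \<Rightarrow> 'k::field) set)" if "n = 0 \<or> n = 2*p+1" for n
    unfolding alpha_beta_gamma_eq_pbasis J_def using that p
    by (auto simp: pbasis_closed valid_std_path pbasis_std_path_apply pbasis_std_path_Triv in_V_def)
  have hc: "pa_add (pbasis (std_path True 1 True)) (pbasis (std_path True 2 True))
      \<in> (kQ_carrier :: (qpath \<Rightarrow> 'k::field) set)"
    by (simp add: pa_add_closed pbasis_closed valid_std_path)
  have h: "pa_add (alpha_beta_gamma 1) (alpha_beta_gamma 2) \<in> (J p :: (qpath \<Rightarrow> 'k::field) set)"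
    unfolding alpha_beta_gamma_eq_pbasis J_def using p hc
    by (auto simp: pbasis_closed valid_std_path pbasis_std_path_apply pbasis_std_path_Triv
      in_V_def pa_add_def pa_add_closed)
  show ?thesis unfolding Igens_def using b g h by auto
qed

lemma ideal_I: "ideal (Iideal p :: (qpath \<Rightarrow> 'k::field) set) kQ"
proof -
  interpret ring "kQ :: (qpath \<Rightarrow> 'k::field) ring" by (rule ring_kQ)
  show ?thesis unfolding Iideal_def by (rule genideal_ideal) (use Igens_subset_carrier in simp)
qed

lemma Igens_subset_I: "(Igens p :: (qpath \<Rightarrow> 'k::field) set) \<subseteq> Iideal p"
proof -
  interpret ring "kQ :: (qpath \<Rightarrow> 'k::field) ring" by (rule ring_kQ)
  show ?thesis unfolding Iideal_def by (rule genideal_self) (use Igens_subset_carrier in simp)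
qed

lemma I_subset_J: "p > 0 \<Longrightarrow> (Iideal p :: (qpath \<Rightarrow> 'k::field) set) \<subseteq> J p"
proof -
  assume p: "p > 0"
  interpret ring "kQ :: (qpath \<Rightarrow> 'k::field) ring" by (rule ring_kQ)
  show ?thesis unfolding Iideal_def
    by (rule genideal_minimal[OF ideal_J[OF p] Igens_subset_J[OF p]])
qed

lemma plen_std_path: "plen (std_path l n r) = (if l then 1 else 0) + n + (if r then 1 else 0)"
  by (auto simp: std_path_def std_word_def)

lemma J_subset_arrow_ideal_pow_2: "p > 0 \<Longrightarrow> J p \<subseteq> arrow_ideal_pow 2"
proof
  fix a assume p: "p > 0" and a: "a \<in> J p"
  have "2 \<le> plen q" if "a q \<noteq> 0" for q
  proof -
    have "valid_path q" using a that by (auto simp: J_def kQ_carrier_def)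
    then show ?thesis
    proof (rule valid_path_cases)
      assume "q = Triv V1" then show ?thesis using a that by (auto simp: J_def)
    next
      assume "q = Triv V3" then show ?thesis using a that by (auto simp: J_def)
    next
      fix l n r assume qe: "q = std_path l n r"
      have "\<not> (n < 6*p+1 \<and> \<not> (l \<and> r))" using a that qe by (auto simp: J_def)
      then show ?thesis using qe p by (auto simp: plen_std_path)
    qed
  qed
  then show "a \<in> arrow_ideal_pow 2" using a by (auto simp: arrow_ideal_pow_def J_def)
qed

lemma pbasis_long_in_I:
  assumes "n \<ge> 6*p+1"
  shows "pbasis (std_path l n r) \<in> (Iideal p :: (qpath \<Rightarrow> 'k::field) set)"
proof -
  interpret ideal "Iideal p :: (qpath \<Rightarrow> 'k) set" kQ by (rule ideal_I)
  define u v :: "qpath \<Rightarrow> 'k"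
    where "u = pbasis (std_path l 0 False)" and "v = pbasis (std_path False (n - (6*p+1)) r)"
  have "betapow (6*p+1) \<in> Iideal p"
    using Igens_subset_I[of p] unfolding Igens_def by blast
  moreover have "u \<in> kQ_carrier" "v \<in> kQ_carrier"
    by (simp_all add: u_def v_def pbasis_closed valid_std_path)
  ultimately have "pa_mult (pa_mult u (betapow (6*p+1))) v \<in> Iideal p"
    using I_l_closed[of "betapow (6*p+1)" u] I_r_closed[of "pa_mult u (betapow (6*p+1))" v]
    by (simp, blast)
  moreover have "pa_mult (pa_mult u (betapow (6*p+1))) v = pbasis (std_path l n r)"
    unfolding u_def v_def betapow_eq_pbasis_6p1 using assms by (simp add: pbasis_mult_std_path)
  ultimately show ?thesis by simp
qed

lemma arrow_ideal_pow_subset_I: "arrow_ideal_pow (6*p+3) \<subseteq> (Iideal p :: (qpath \<Rightarrow> 'k::field) set)"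
proof
  fix a :: "qpath \<Rightarrow> 'k" assume a: "a \<in> arrow_ideal_pow (6*p+3)"
  show "a \<in> Iideal p"
  proof (rule ideal_if_support_in[OF ideal_I])
    show "a \<in> kQ_carrier" using a by (simp add: arrow_ideal_pow_def)
    fix q assume aq: "a q \<noteq> 0"
    then have v: "valid_path q" and len: "6*p+3 \<le> plen q"
      using a by (auto simp: arrow_ideal_pow_def kQ_carrier_def)
    from v show "pbasis q \<in> Iideal p"
    proof (rule valid_path_cases)
      assume "q = Triv V1" then show ?thesis using len by simp
    next
      assume "q = Triv V3" then show ?thesis using len by simp
    next
      fix l n r assume qe: "q = std_path l n r"
      then have "n \<ge> 6*p+1" using len by (auto simp: plen_std_path split: if_splits)
      then show ?thesis using qe pbasis_long_in_I by blast
    qed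
  qed
qed

lemma admissible_Iideal: "p > 0 \<Longrightarrow> admissible (Iideal p :: (qpath \<Rightarrow> 'k::field) set)"
proof -
  assume p: "p > 0"
  have "(Iideal p :: (qpath \<Rightarrow> 'k::field) set) \<subseteq> arrow_ideal_pow 2"
    using I_subset_J[OF p] J_subset_arrow_ideal_pow_2[OF p] by (rule order_trans)
  moreover have "\<exists>m\<ge>2. arrow_ideal_pow m \<subseteq> (Iideal p :: (qpath \<Rightarrow> 'k::field) set)"
    by (rule exI[of _ "6*p+3"]) (simp add: arrow_ideal_pow_subset_I)
  ultimately show ?thesis unfolding admissible_def using ideal_I by blast
qed

definition ring_derivation :: "('a, 'm) ring_scheme \<Rightarrow> ('a \<Rightarrow> 'a) \<Rightarrow> bool" where
  "ring_derivation R D \<longleftrightarrow> (\<forall>x\<in>carrier R. D x \<in> carrier R) \<and>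
     (\<forall>x\<in>carrier R. \<forall>y\<in>carrier R. D (x \<oplus>\<^bsub>R\<^esub> y) = D x \<oplus>\<^bsub>R\<^esub> D y) \<and>
     (\<forall>x\<in>carrier R. \<forall>y\<in>carrier R. D (x \<otimes>\<^bsub>R\<^esub> y) = (D x \<otimes>\<^bsub>R\<^esub> y) \<oplus>\<^bsub>R\<^esub> (x \<otimes>\<^bsub>R\<^esub> D y))"

context ring
begin

lemma derivation_closed: "ring_derivation R D \<Longrightarrow> x \<in> carrier R \<Longrightarrow> D x \<in> carrier R"
  by (simp add: ring_derivation_def)

lemma derivation_add:
  "ring_derivation R D \<Longrightarrow> x \<in> carrier R \<Longrightarrow> y \<in> carrier R \<Longrightarrow> D (x \<oplus> y) = D x \<oplus> D y"
  by (simp add: ring_derivation_def)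

lemma derivation_mult:
  "ring_derivation R D \<Longrightarrow> x \<in> carrier R \<Longrightarrow> y \<in> carrier R \<Longrightarrow> D (x \<otimes> y) = D x \<otimes> y \<oplus> x \<otimes> D y"
  by (simp add: ring_derivation_def)

lemma derivation_zero: "ring_derivation R D \<Longrightarrow> D \<zero> = \<zero>"
  using derivation_add[of D \<zero> \<zero>] derivation_closed[of D \<zero>] by simp

lemma derivation_one: "ring_derivation R D \<Longrightarrow> D \<one> = \<zero>"
  using derivation_mult[of D \<one> \<one>] derivation_closed[of D \<one>] by (simp add: add.r_cancel_one')

lemma derivation_mult_eq_zero:
  "ring_derivation R D \<Longrightarrow> x \<in> carrier R \<Longrightarrow> y \<in> carrier R \<Longrightarrow> D x = \<zero> \<Longrightarrow> D y = \<zero> \<Longrightarrow>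
     D (x \<otimes> y) = \<zero>"
  by (simp add: derivation_mult)

lemma derivation_mult3:
  assumes D: "ring_derivation R D" and xyz: "x \<in> carrier R" "y \<in> carrier R" "z \<in> carrier R"
  shows "D (x \<otimes> y \<otimes> z) = D x \<otimes> y \<otimes> z \<oplus> x \<otimes> D y \<otimes> z \<oplus> x \<otimes> y \<otimes> D z"
  using xyz derivation_closed[OF D] by (simp add: derivation_mult[OF D] l_distr)

lemma derivation_corner:
  assumes D: "ring_derivation R D" and e: "e \<in> carrier R" "D e = \<zero>" and f: "f \<in> carrier R" "D f = \<zero>"
    and x: "x \<in> carrier R" "x = e \<otimes> x \<otimes> f"
  shows "D x = e \<otimes> D x \<otimes> f"
proof -
  have "D x = D (e \<otimes> x \<otimes> f)" using x by simp
  also have "\<dots> = e \<otimes> D x \<otimes> f"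
    using e f x(1) derivation_closed[OF D x(1)] by (simp add: derivation_mult3[OF D])
  finally show ?thesis .
qed

lemma inner_derivation:
  assumes y: "y \<in> carrier R"
  shows "ring_derivation R (\<lambda>x. y \<otimes> x \<ominus> x \<otimes> y)"
proof -
  have "y \<otimes> (x \<oplus> z) \<ominus> (x \<oplus> z) \<otimes> y = (y \<otimes> x \<ominus> x \<otimes> y) \<oplus> (y \<otimes> z \<ominus> z \<otimes> y)"
    if "x \<in> carrier R" "z \<in> carrier R" for x z
    using that y by (simp add: ring_simprules r_distr l_distr minus_eq minus_add a_ac)
  moreover have "y \<otimes> (x \<otimes> z) \<ominus> (x \<otimes> z) \<otimes> y =
      (y \<otimes> x \<ominus> x \<otimes> y) \<otimes> z \<oplus> x \<otimes> (y \<otimes> z \<ominus> z \<otimes> y)"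
    if "x \<in> carrier R" "z \<in> carrier R" for x z
    using that y by (simp add: ring_simprules r_distr l_distr minus_eq l_minus r_minus m_assoc a_ac)
  ultimately show ?thesis
    using y by (simp add: ring_derivation_def)
qed

lemma inner_derivation_add:
  "y \<in> carrier R \<Longrightarrow> z \<in> carrier R \<Longrightarrow> x \<in> carrier R \<Longrightarrow>
     (y \<oplus> z) \<otimes> x \<ominus> x \<otimes> (y \<oplus> z) = (y \<otimes> x \<ominus> x \<otimes> y) \<oplus> (z \<otimes> x \<ominus> x \<otimes> z)"
  by (simp add: ring_simprules l_distr r_distr minus_eq minus_add a_ac)

lemma derivation_diff:
  assumes "ring_derivation R D" "ring_derivation R D'"
  shows "ring_derivation R (\<lambda>x. D x \<ominus> D' x)"
  using assms unfolding ring_derivation_def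
  by (simp add: ring_simprules minus_eq minus_add a_ac l_distr r_distr l_minus r_minus)

lemma derivation_idempotent:
  assumes D: "ring_derivation R D" and e: "e \<in> carrier R" "e \<otimes> e = e"
  shows "e \<otimes> D e \<otimes> e = \<zero>"
proof -
  have De: "D e \<in> carrier R" using derivation_closed[OF D e(1)] .
  have "e \<otimes> D e = e \<otimes> (D e \<otimes> e \<oplus> e \<otimes> D e)"
    using derivation_mult[OF D e(1) e(1)] e(2) by simp
  also have "\<dots> = e \<otimes> D e \<otimes> e \<oplus> e \<otimes> D e"
    using e De by (simp add: r_distr m_assoc[symmetric])
  finally show ?thesis
    using e De by (simp add: add.r_cancel_one')
qed

lemma derivation_orthogonal:
  assumes D: "ring_derivation R D" and ef: "e \<in> carrier R" "f \<in> carrier R" "e \<otimes> f = \<zero>"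
  shows "e \<otimes> D f = \<ominus> (D e \<otimes> f)"
proof -
  have "D e \<otimes> f \<oplus> e \<otimes> D f = \<zero>"
    using derivation_mult[OF D ef(1,2)] ef(3) derivation_zero[OF D] by simp
  then show ?thesis
    using ef derivation_closed[OF D] by (simp add: minus_equality a_comm)
qed

lemma derivation_on_idempotent:
  assumes D: "ring_derivation R D"
    and c: "e1 \<in> carrier R" "e2 \<in> carrier R" "e3 \<in> carrier R"
    and idem: "e1 \<otimes> e1 = e1" "e2 \<otimes> e2 = e2" "e3 \<otimes> e3 = e3"
    and orth: "e1 \<otimes> e2 = \<zero>" "e1 \<otimes> e3 = \<zero>" "e2 \<otimes> e1 = \<zero>" "e2 \<otimes> e3 = \<zero>"
      "e3 \<otimes> e1 = \<zero>" "e3 \<otimes> e2 = \<zero>"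
    and one: "e1 \<oplus> e2 \<oplus> e3 = \<one>"
  defines "y \<equiv> D e1 \<otimes> e1 \<oplus> D e2 \<otimes> e2 \<oplus> D e3 \<otimes> e3"
  shows "D e1 = y \<otimes> e1 \<ominus> e1 \<otimes> y"
proof -
  have Dc: "D e1 \<in> carrier R" "D e2 \<in> carrier R" "D e3 \<in> carrier R"
    using c derivation_closed[OF D] by auto
  have "y \<otimes> e1 = D e1 \<otimes> e1"
    using c Dc by (simp add: y_def l_distr m_assoc idem orth)
  moreover have "e1 \<otimes> y = \<ominus> (D e1 \<otimes> (e2 \<oplus> e3))"
    using c Dc
    by (simp add: y_def r_distr m_assoc[symmetric] derivation_idempotent[OF D c(1) idem(1)]
        derivation_orthogonal[OF D c(1) c(2) orth(1)] derivation_orthogonal[OF D c(1) c(3) orth(2)]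
        l_minus minus_add, simp add: m_assoc idem)
  moreover have "e2 \<oplus> e3 = \<one> \<ominus> e1"
  proof -
    have "\<one> \<ominus> e1 = (e2 \<oplus> e3) \<oplus> (e1 \<oplus> \<ominus> e1)"
      using c by (simp add: one[symmetric] minus_eq a_ac)
    then show ?thesis using c by (simp add: r_neg)
  qed
  ultimately show ?thesis
    using c Dc by (simp add: r_distr r_minus minus_eq minus_add a_ac r_neg)
qed

end

section \<open>The linear constraints\<close>

text \<open>If D(\<alpha>) = \<alpha> a(\<beta>), D(\<beta>) = g(\<beta>), D(\<gamma>) = c(\<beta>) \<gamma> and s = a + c, then
  D(\<alpha> \<beta>^n \<gamma>) = \<alpha> (\<beta>^n s(\<beta>) + n \<beta>^(n-1) g(\<beta>)) \<gamma>.  Applying D to the generators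
  \<alpha>\<gamma>, \<alpha>(\<beta> + \<beta>^2)\<gamma> and \<alpha>\<beta>^(2p+1)\<gamma> of I, where 2p + 1 = 1 in k, gives the three
  hypotheses below.\<close>

context
  fixes p :: nat and s g :: "nat \<Rightarrow> 'k::field"
  assumes p2: "p \<ge> 2" and g0: "g 0 = 0"
    and V0: "in_V p s"
    and V1: "in_V p (\<lambda>m. seq_shift 1 s m + g m + seq_shift 2 s m + 2 * seq_shift 1 g m)"
    and V2p1: "in_V p (\<lambda>m. seq_shift (2*p+1) s m + seq_shift (2*p) g m)"
begin

lemma constraints_g_eq_neg_s:
  assumes "2 \<le> i" "i \<le> 4*p"
  shows "g i = - s (i - 1)"
proof -
  have "seq_shift (2*p+1) s (2*p+i) + seq_shift (2*p) g (2*p+i) = 0"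
    using V2p1 assms p2 unfolding in_V_def by auto
  moreover have "seq_shift (2*p+1) s (2*p+i) = s (i - 1)" "seq_shift (2*p) g (2*p+i) = g i"
    using assms by (auto simp: seq_shift_def)
  ultimately show ?thesis by (simp add: eq_neg_iff_add_eq_0 add.commute)
qed

lemma constraints_V1_at:
  assumes "3 \<le> i" "i < 6*p+1" "i \<noteq> 2*p+1"
  shows "s (i - 1) + g i + s (i - 2) + 2 * g (i - 1) = 0"
proof -
  have "seq_shift 1 s i + g i + seq_shift 2 s i + 2 * seq_shift 1 g i = 0"
    using V1 assms p2 unfolding in_V_def by auto
  then show ?thesis using assms by (simp add: seq_shift_def)
qed

lemma constraints_s_eq_0:
  assumes "1 \<le> i" "i < 6*p+1"
  shows "s i = 0"
proof -
  have s_low: "s i = 0" if "i < 6*p+1" "i \<noteq> 0" "i \<noteq> 1" "i \<noteq> 2" "i \<noteq> 2*p+1" for i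
    using V0 that unfolding in_V_def by auto
  have g2: "g 2 = - s 1" and g3: "g 3 = - s 2"
    using constraints_g_eq_neg_s[of 2] constraints_g_eq_neg_s[of 3] p2 by simp_all
  have "s 1 = s 2" using V0 by (simp add: in_V_def)
  moreover have "s 2 + g 3 + s 1 + 2 * g 2 = 0"
    using constraints_V1_at[of 3] p2 by simp
  ultimately have s12: "s 1 = 0" "s 2 = 0"
    using g2 g3 by (simp_all add: algebra_simps)
  have "s (2*p+2) + g (2*p+3) + s (2*p+1) + 2 * g (2*p+2) = 0"
    using constraints_V1_at[of "2*p+3"] p2 by simp
  moreover have "s (2*p+2) = 0" by (rule s_low) (use p2 in auto)
  moreover have "g (2*p+3) = - s (2*p+2)" "g (2*p+2) = - s (2*p+1)"
    using constraints_g_eq_neg_s[of "2*p+3"] constraints_g_eq_neg_s[of "2*p+2"] p2 by simp_all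
  ultimately have "s (2*p+1) = 0" by (simp add: algebra_simps)
  with s12 s_low[of i] assms show ?thesis
    by (cases "i = 1 \<or> i = 2 \<or> i = 2*p+1") auto
qed

lemma constraints_g_eq_0:
  assumes "i < 6*p+1"
  shows "g i = 0"
proof -
  have "s 0 + g 1 = s 1 + g 2 + s 0 + 2 * g 1"
    using V1 g0 by (simp add: in_V_def seq_shift_def numeral_2_eq_2)
  moreover have "g 2 = - s 1"
    using constraints_g_eq_neg_s[of 2] p2 by simp
  moreover have "(2::'k) \<noteq> 1"
    by (metis one_add_one add_cancel_right_right one_neq_zero)
  ultimately have g1: "g 1 = 0"
    by (simp add: algebra_simps)
  have g_low: "g i = 0" if "i \<le> 4*p" for i
  proof (cases "i \<le> 1")
    case True
    then show ?thesis using g0 g1 by (cases i) auto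
  next
    case False
    then show ?thesis
      using that constraints_g_eq_neg_s[of i] constraints_s_eq_0[of "i - 1"] by simp
  qed
  have g_high: "g (4*p + k) = 0" if "4*p + k < 6*p+1" for k
    using that
  proof (induction k)
    case (Suc k)
    have "s (4*p + k) = 0" "s (4*p + k - 1) = 0"
      using Suc.prems p2 by (auto intro!: constraints_s_eq_0)
    then show ?case
      using constraints_V1_at[of "4*p + Suc k"] Suc p2 by simp
  qed (simp add: g_low)
  show ?thesis
    using assms g_low g_high[of "i - 4*p"] by (cases "i \<le> 4*p") auto
qed

end

definition idem :: "vert \<Rightarrow> qpath \<Rightarrow> 'k::field" where
  "idem v = pbasis (Triv v)"

definition alpha :: "qpath \<Rightarrow> 'k::field" where
  "alpha = pbasis (std_path True 0 False)"

definition gamma :: "qpath \<Rightarrow> 'k::field" where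
  "gamma = pbasis (std_path False 0 True)"

(* unlike betapow, beta_pow is also correct for n = 0, where it is e_2 *)
definition beta_pow :: "nat \<Rightarrow> qpath \<Rightarrow> 'k::field" where
  "beta_pow n = pbasis (std_path False n False)"

lemmas generator_defs = idem_def alpha_def gamma_def beta_pow_def

lemma generators_closed:
  "idem v \<in> kQ_carrier" "alpha \<in> kQ_carrier" "gamma \<in> kQ_carrier" "beta_pow n \<in> kQ_carrier"
  by (simp_all add: generator_defs pbasis_closed valid_std_path)

lemma idem_mult: "pa_mult (idem v) (idem w) = (if v = w then idem v else (\<lambda>_. 0))"
  unfolding idem_def by (rule ext) (simp only: pa_mult_Triv_left, auto simp: pbasis_def)

lemma pa_one_eq_idems: "pa_one = pa_add (pa_add (idem V1) (idem V2)) (idem V3)"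
  by (simp add: pa_one_def idem_def)

lemma beta_pow_0: "beta_pow 0 = idem V2"
  by (simp add: idem_def beta_pow_def Triv2_eq_std_path)

lemma beta_pow_Suc: "beta_pow (Suc n) = pa_mult (beta_pow n) (beta_pow 1)"
  by (simp add: beta_pow_def pbasis_mult_std_path)

lemma pbasis_std_path_eq_products:
  "pbasis (std_path False n False) = beta_pow n"
  "pbasis (std_path True n False) = pa_mult alpha (beta_pow n)"
  "pbasis (std_path False n True) = pa_mult (beta_pow n) gamma"
  "pbasis (std_path True n True) = pa_mult (pa_mult alpha (beta_pow n)) gamma"
  by (simp_all add: generator_defs pbasis_mult_std_path)

lemma pbasis_std_path_corner:
  "pbasis (std_path l n r) =
     pa_mult (pa_mult (idem (if l then V1 else V2)) (pbasis (std_path l n r))) (idem (if r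
         then V3 else V2))"
proof -
  have coeffs: "(\<lambda>m. pbasis (std_path l n r) (std_path l m r)) = kdelta n"
    by (auto simp: pbasis_def kdelta_def)
  show ?thesis
    unfolding idem_def corner_bpoly[OF pbasis_closed[OF valid_std_path]] coeffs
    by (rule pbasis_std_path)
qed

lemma fin_supp_coeffs: "x \<in> kQ_carrier \<Longrightarrow> fin_supp (\<lambda>n. x (std_path l n r))"
proof -
  assume x: "x \<in> kQ_carrier"
  have "finite ((\<lambda>n. std_path l n r) -` {q. x q \<noteq> 0})"
    using x by (intro finite_vimageI) (auto simp: kQ_carrier_def inj_def)
  then show ?thesis by (simp add: fin_supp_def vimage_def)
qed

lemma bpoly_in_I_if_low_zero:
  assumes f: "fin_supp f" and low: "\<And>i. i < 6*p+1 \<Longrightarrow> f i = 0"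
  shows "bpoly l r f \<in> (Iideal p :: (qpath \<Rightarrow> 'k::field) set)"
proof (rule ideal_if_support_in[OF ideal_I bpoly_closed[OF f]])
  fix q assume "bpoly l r f q \<noteq> 0"
  then obtain n where "path_shape q = Some (l, n, r)" "f n \<noteq> 0"
    by (auto simp: bpoly_def split: option.splits if_splits)
  then have "q = std_path l n r" "n \<ge> 6*p+1"
    using low path_shape_SomeD by (auto simp: not_less[symmetric])
  then show "pbasis q \<in> Iideal p" using pbasis_long_in_I by blast
qed

lemma bpoly_in_I_low_zero:
  assumes "p > 0" "bpoly l r f \<in> (Iideal p :: (qpath \<Rightarrow> 'k::field) set)"
    and "\<not> (l \<and> r)" "n < 6*p+1"
  shows "f n = 0"
proof -
  have "bpoly l r f \<in> J p" using I_subset_J[OF assms(1)] assms(2) by blast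
  then have "bpoly l r f (std_path l n r) = 0" using assms(3,4) unfolding J_def by blast
  then show ?thesis by simp
qed

lemma bpoly_in_I_in_V:
  assumes "p > 0" "bpoly True True f \<in> (Iideal p :: (qpath \<Rightarrow> 'k::field) set)"
  shows "in_V p f"
proof -
  have "bpoly True True f \<in> J p" using I_subset_J[OF assms(1)] assms(2) by blast
  then show ?thesis unfolding J_def by simp
qed

section \<open>Derivations of \<Lambda>\<close>

locale Lambda_derivation =
  fixes p :: nat and D :: "(qpath \<Rightarrow> 'k::field) set \<Rightarrow> (qpath \<Rightarrow> 'k) set"
  assumes p_pos: "p > 0" and char_p: "CHAR('k) = p"
    and derivation: "is_derivation (Lambda p) (Lscalar p) D"
begin

abbreviation I :: "(qpath \<Rightarrow> 'k) set" where "I \<equiv> Iideal p"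
abbreviation \<Lambda> :: "(qpath \<Rightarrow> 'k) set ring" where "\<Lambda> \<equiv> Lambda p"

definition cls :: "(qpath \<Rightarrow> 'k) \<Rightarrow> (qpath \<Rightarrow> 'k) set" where
  "cls x = I +>\<^bsub>kQ\<^esub> x"

abbreviation E :: "vert \<Rightarrow> (qpath \<Rightarrow> 'k) set" where "E v \<equiv> cls (idem v)"

sublocale \<Lambda>: ring \<Lambda>
  unfolding Lambda_def by (rule ideal.quotient_is_ring[OF ideal_I])

sublocale cls: ring_hom_ring kQ \<Lambda> cls
proof -
  have "cls = (+>\<^bsub>kQ\<^esub>) I" by (rule ext) (simp add: cls_def)
  then show "ring_hom_ring kQ \<Lambda> cls"
    unfolding Lambda_def using ideal.rcos_ring_hom_ring[OF ideal_I] by simp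
qed

lemma cls_closed: "x \<in> kQ_carrier \<Longrightarrow> cls x \<in> carrier \<Lambda>"
  using cls.hom_closed by simp

lemma cls_mult: "x \<in> kQ_carrier \<Longrightarrow> y \<in> kQ_carrier \<Longrightarrow> cls (pa_mult x y) = cls x \<otimes>\<^bsub>\<Lambda>\<^esub> cls y"
  using cls.hom_mult by simp

lemma cls_add: "x \<in> kQ_carrier \<Longrightarrow> y \<in> kQ_carrier \<Longrightarrow> cls (pa_add x y) = cls x \<oplus>\<^bsub>\<Lambda>\<^esub> cls y"
  using cls.hom_add by simp

lemma cls_one: "cls pa_one = \<one>\<^bsub>\<Lambda>\<^esub>"
  using cls.hom_one by simp

lemma cls_zero: "cls (\<lambda>_. 0) = \<zero>\<^bsub>\<Lambda>\<^esub>"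
  using cls.hom_zero by simp

lemma cls_neg: "x \<in> kQ_carrier \<Longrightarrow> cls (\<lambda>q. - x q) = \<ominus>\<^bsub>\<Lambda>\<^esub> cls x"
  using cls.hom_a_inv[of x] kQ_a_inv[of x] by simp

lemma cls_diff:
  "x \<in> kQ_carrier \<Longrightarrow> y \<in> kQ_carrier \<Longrightarrow> cls (pa_add x (\<lambda>q. - y q)) = cls x \<ominus>\<^bsub>\<Lambda>\<^esub> cls y"
  by (simp add: cls_add pa_neg_closed cls_neg \<Lambda>.minus_eq)

lemma cls_eq_zero_iff: "x \<in> kQ_carrier \<Longrightarrow> cls x = \<zero>\<^bsub>\<Lambda>\<^esub> \<longleftrightarrow> x \<in> I"
proof -
  interpret ideal I kQ by (rule ideal_I)
  assume x: "x \<in> kQ_carrier"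
  have zero: "\<zero>\<^bsub>\<Lambda>\<^esub> = I" by (simp add: Lambda_def FactRing_def)
  show ?thesis
  proof
    assume "cls x = \<zero>\<^bsub>\<Lambda>\<^esub>"
    then show "x \<in> I"
      using rcos_const_imp_mem[of x] x by (simp add: cls_def zero)
  next
    assume "x \<in> I"
    then have "I +>\<^bsub>kQ\<^esub> x = I"
      using x additive_subgroup.a_subgroup[OF is_additive_subgroup]
      by (intro abelian_group.a_coset_join2[OF ring.is_abelian_group[OF ring_kQ]]) simp_all
    then show "cls x = \<zero>\<^bsub>\<Lambda>\<^esub>" by (simp add: cls_def zero)
  qed
qed

lemma cls_I: "x \<in> I \<Longrightarrow> cls x = \<zero>\<^bsub>\<Lambda>\<^esub>"
  using cls_eq_zero_iff additive_subgroup.a_subset[OF ideal.axioms(1)[OF ideal_I]] by auto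

lemma cls_surj: "a \<in> carrier \<Lambda> \<Longrightarrow> \<exists>x\<in>kQ_carrier. a = cls x"
  by (auto simp: Lambda_def FactRing_def A_RCOSETS_def RCOSETS_def a_r_coset_def cls_def)

lemma cls_eqI:
  assumes "x \<in> kQ_carrier" "y \<in> kQ_carrier" "pa_add x (\<lambda>q. - y q) \<in> I"
  shows "cls x = cls y"
proof -
  have "cls x \<ominus>\<^bsub>\<Lambda>\<^esub> cls y = \<zero>\<^bsub>\<Lambda>\<^esub>"
    using assms cls_diff[of x y] cls_eq_zero_iff[of "pa_add x (\<lambda>q. - y q)"]
    by (simp add: pa_add_closed pa_neg_closed)
  then show ?thesis using assms(1,2) by (simp add: cls_closed)
qed

lemma Lscalar_eq_cls: "Lscalar p c = cls (pa_smult c pa_one)"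
  by (simp add: Lscalar_def cls_def)

lemma Lscalar_closed: "Lscalar p c \<in> carrier \<Lambda>"
  by (simp add: Lscalar_eq_cls cls_closed pa_smult_closed pa_one_closed)

lemma cls_smult: "x \<in> kQ_carrier \<Longrightarrow> cls (pa_smult c x) = Lscalar p c \<otimes>\<^bsub>\<Lambda>\<^esub> cls x"
  by (simp add: Lscalar_eq_cls cls_mult[symmetric] pa_smult_closed pa_one_closed pa_mult_smult_one)

lemma Lscalar_central: "a \<in> carrier \<Lambda> \<Longrightarrow> Lscalar p c \<otimes>\<^bsub>\<Lambda>\<^esub> a = a \<otimes>\<^bsub>\<Lambda>\<^esub> Lscalar p c"
proof -
  assume "a \<in> carrier \<Lambda>"
  then obtain x where x: "x \<in> kQ_carrier" "a = cls x" using cls_surj by blast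
  have "pa_mult x (pa_smult c pa_one) = pa_smult c x"
    using x by (simp add: pa_mult_smult_right pa_mult_one)
  then show ?thesis using x
    by (simp add: Lscalar_eq_cls cls_mult[symmetric] pa_smult_closed pa_one_closed
      pa_mult_smult_one)
qed

lemma ring_derivation_D: "ring_derivation \<Lambda> D"
  using derivation by (simp add: is_derivation_def ring_derivation_def Pi_def)

lemma D_Lscalar: "a \<in> carrier \<Lambda> \<Longrightarrow> D (Lscalar p c \<otimes>\<^bsub>\<Lambda>\<^esub> a) = Lscalar p c \<otimes>\<^bsub>\<Lambda>\<^esub> D a"
  using derivation by (simp add: is_derivation_def)

lemma D_closed: "a \<in> carrier \<Lambda> \<Longrightarrow> D a \<in> carrier \<Lambda>"
  using ring_derivation_D \<Lambda>.derivation_closed by blast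

lemma generators_cls_closed:
  "E v \<in> carrier \<Lambda>" "cls alpha \<in> carrier \<Lambda>" "cls gamma \<in> carrier \<Lambda>" "cls (beta_pow n) \<in> carrier \<Lambda>"
  by (simp_all add: cls_closed generators_closed)

end

context Lambda_derivation
begin

lemma E_mult: "E v \<otimes>\<^bsub>\<Lambda>\<^esub> E w = (if v = w then E v else \<zero>\<^bsub>\<Lambda>\<^esub>)"
  by (simp add: cls_mult[symmetric] generators_closed idem_mult cls_zero)

lemma E_sum: "E V1 \<oplus>\<^bsub>\<Lambda>\<^esub> E V2 \<oplus>\<^bsub>\<Lambda>\<^esub> E V3 = \<one>\<^bsub>\<Lambda>\<^esub>"
  by (simp add: cls_add[symmetric] generators_closed pa_add_closed pa_one_eq_idems[symmetric]
    cls_one)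

definition y_idem :: "(qpath \<Rightarrow> 'k) set" where
  "y_idem = D (E V1) \<otimes>\<^bsub>\<Lambda>\<^esub> E V1 \<oplus>\<^bsub>\<Lambda>\<^esub> D (E V2) \<otimes>\<^bsub>\<Lambda>\<^esub> E V2 \<oplus>\<^bsub>\<Lambda>\<^esub> D (E V3) \<otimes>\<^bsub>\<Lambda>\<^esub> E V3"

lemma y_idem_closed: "y_idem \<in> carrier \<Lambda>"
  by (simp add: y_idem_def D_closed generators_cls_closed)

lemma D_E: "D (E v) = y_idem \<otimes>\<^bsub>\<Lambda>\<^esub> E v \<ominus>\<^bsub>\<Lambda>\<^esub> E v \<otimes>\<^bsub>\<Lambda>\<^esub> y_idem"
proof -
  have E: "E V1 \<in> carrier \<Lambda>" "E V2 \<in> carrier \<Lambda>" "E V3 \<in> carrier \<Lambda>"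
    by (simp_all add: generators_cls_closed)
  then have DE: "D (E V1) \<in> carrier \<Lambda>" "D (E V2) \<in> carrier \<Lambda>" "D (E V3) \<in> carrier \<Lambda>"
    using D_closed by auto
  note rule = \<Lambda>.derivation_on_idempotent[OF ring_derivation_D]
  show ?thesis
  proof (cases v)
    case V1
    show ?thesis unfolding V1 y_idem_def
      by (rule rule[OF E]) (simp_all add: E_mult E_sum)
  next
    case V2
    have y: "y_idem = D (E V2) \<otimes>\<^bsub>\<Lambda>\<^esub> E V2 \<oplus>\<^bsub>\<Lambda>\<^esub> D (E V1) \<otimes>\<^bsub>\<Lambda>\<^esub> E V1 \<oplus>\<^bsub>\<Lambda>\<^esub> D (E V3) \<otimes>\<^bsub>\<Lambda>\<^esub> E V3"
      unfolding y_idem_def using E DE by (simp add: \<Lambda>.a_ac)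
    have sum: "E V2 \<oplus>\<^bsub>\<Lambda>\<^esub> E V1 \<oplus>\<^bsub>\<Lambda>\<^esub> E V3 = \<one>\<^bsub>\<Lambda>\<^esub>"
      using E_sum E by (simp add: \<Lambda>.a_ac)
    show ?thesis unfolding V2 y
      by (rule rule[OF E(2) E(1) E(3)]) (simp_all add: E_mult sum)
  next
    case V3
    have y: "y_idem = D (E V3) \<otimes>\<^bsub>\<Lambda>\<^esub> E V3 \<oplus>\<^bsub>\<Lambda>\<^esub> D (E V1) \<otimes>\<^bsub>\<Lambda>\<^esub> E V1 \<oplus>\<^bsub>\<Lambda>\<^esub> D (E V2) \<otimes>\<^bsub>\<Lambda>\<^esub> E V2"
      unfolding y_idem_def using E DE by (simp add: \<Lambda>.a_ac)
    have sum: "E V3 \<oplus>\<^bsub>\<Lambda>\<^esub> E V1 \<oplus>\<^bsub>\<Lambda>\<^esub> E V2 = \<one>\<^bsub>\<Lambda>\<^esub>"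
      using E_sum E by (simp add: \<Lambda>.a_ac)
    show ?thesis unfolding V3 y
      by (rule rule[OF E(3) E(1) E(2)]) (simp_all add: E_mult sum)
  qed
qed

definition D0 :: "(qpath \<Rightarrow> 'k) set \<Rightarrow> (qpath \<Rightarrow> 'k) set" where
  "D0 x = D x \<ominus>\<^bsub>\<Lambda>\<^esub> (y_idem \<otimes>\<^bsub>\<Lambda>\<^esub> x \<ominus>\<^bsub>\<Lambda>\<^esub> x \<otimes>\<^bsub>\<Lambda>\<^esub> y_idem)"

lemma ring_derivation_D0: "ring_derivation \<Lambda> D0"
  unfolding D0_def[abs_def]
  by (rule \<Lambda>.derivation_diff[OF ring_derivation_D \<Lambda>.inner_derivation[OF y_idem_closed]])

lemma D0_closed: "a \<in> carrier \<Lambda> \<Longrightarrow> D0 a \<in> carrier \<Lambda>"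
  using ring_derivation_D0 \<Lambda>.derivation_closed by blast

lemma D0_E: "D0 (E v) = \<zero>\<^bsub>\<Lambda>\<^esub>"
  using y_idem_closed generators_cls_closed(1)[of v]
  by (simp add: D0_def D_E \<Lambda>.minus_eq \<Lambda>.r_neg)

text \<open>Since D0 kills the idempotents, it preserves the corners e_i \<Lambda> e_j, which are spanned
  by the paths from j to i.\<close>

lemma D0_std_path:
  "\<exists>f. fin_supp f \<and> D0 (cls (pbasis (std_path l n r))) = cls (bpoly l r f)"
proof -
  define g :: "qpath \<Rightarrow> 'k" where "g = pbasis (std_path l n r)"
  define e e' where "e = E (if l then V1 else V2)" and "e' = E (if r then V3 else V2)"
  have g: "g \<in> kQ_carrier" by (simp add: g_def pbasis_closed valid_std_path)
  have ee': "e \<in> carrier \<Lambda>" "e' \<in> carrier \<Lambda>" by (simp_all add: e_def e'_def generators_cls_closed)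
  have "cls g = cls (pa_mult (pa_mult (idem (if l then V1 else V2)) g) (idem (if r
      then V3 else V2)))"
    unfolding g_def by (rule arg_cong[where f = cls, OF pbasis_std_path_corner])
  also have "\<dots> = e \<otimes>\<^bsub>\<Lambda>\<^esub> cls g \<otimes>\<^bsub>\<Lambda>\<^esub> e'"
    using g by (simp add: e_def e'_def cls_mult generators_closed pa_mult_closed)
  finally have "cls g = e \<otimes>\<^bsub>\<Lambda>\<^esub> cls g \<otimes>\<^bsub>\<Lambda>\<^esub> e'" .
  then have corner: "D0 (cls g) = e \<otimes>\<^bsub>\<Lambda>\<^esub> D0 (cls g) \<otimes>\<^bsub>\<Lambda>\<^esub> e'"
    using \<Lambda>.derivation_corner[OF ring_derivation_D0 ee'(1) _ ee'(2) _ cls_closed[OF g]]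
    by (simp add: e_def e'_def D0_E)
  obtain x where x: "x \<in> kQ_carrier" "D0 (cls g) = cls x"
    using cls_surj D0_closed[OF cls_closed[OF g]] by blast
  have "cls x = e \<otimes>\<^bsub>\<Lambda>\<^esub> cls x \<otimes>\<^bsub>\<Lambda>\<^esub> e'"
    using corner unfolding x(2) .
  also have "\<dots> = cls (pa_mult (pa_mult (idem (if l then V1 else V2)) x) (idem (if r
      then V3 else V2)))"
    using x(1) by (simp add: e_def e'_def cls_mult generators_closed pa_mult_closed)
  also have "\<dots> = cls (bpoly l r (\<lambda>m. x (std_path l m r)))"
    unfolding idem_def corner_bpoly[OF x(1)] ..
  finally have "D0 (cls g) = cls (bpoly l r (\<lambda>m. x (std_path l m r)))"
    using x(2) by simp
  then show ?thesis
    using fin_supp_coeffs[OF x(1)] unfolding g_def by blast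
qed

definition a_coeffs :: "nat \<Rightarrow> 'k" where
  "a_coeffs = (SOME f. fin_supp f \<and> D0 (cls alpha) = cls (bpoly True False f))"

definition b_coeffs :: "nat \<Rightarrow> 'k" where
  "b_coeffs = (SOME f. fin_supp f \<and> D0 (cls (beta_pow 1)) = cls (bpoly False False f))"

definition c_coeffs :: "nat \<Rightarrow> 'k" where
  "c_coeffs = (SOME f. fin_supp f \<and> D0 (cls gamma) = cls (bpoly False True f))"

lemma a_coeffs: "fin_supp a_coeffs \<and> D0 (cls alpha) = cls (bpoly True False a_coeffs)"
  unfolding a_coeffs_def alpha_def by (rule someI_ex[OF D0_std_path])

lemma b_coeffs: "fin_supp b_coeffs \<and> D0 (cls (beta_pow 1)) = cls (bpoly False False b_coeffs)"
  unfolding b_coeffs_def beta_pow_def by (rule someI_ex[OF D0_std_path])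

lemma c_coeffs: "fin_supp c_coeffs \<and> D0 (cls gamma) = cls (bpoly False True c_coeffs)"
  unfolding c_coeffs_def gamma_def by (rule someI_ex[OF D0_std_path])

lemmas fin_supp_abc = a_coeffs[THEN conjunct1] b_coeffs[THEN conjunct1] c_coeffs[THEN conjunct1]
lemmas D0_alpha = a_coeffs[THEN conjunct2]
lemmas D0_beta = b_coeffs[THEN conjunct2]
lemmas D0_gamma = c_coeffs[THEN conjunct2]

end

lemma seq_shift_power_rule:
  fixes f :: "nat \<Rightarrow> 'k::field"
  shows "seq_shift 1 (\<lambda>m. of_nat n * seq_shift (n - 1) f m) m + seq_shift n f m =
    of_nat (Suc n) * seq_shift n f m"
proof (cases "n = 0 \<or> m < n")
  case True
  then show ?thesis by (auto simp: seq_shift_def)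
next
  case False
  then have "seq_shift 1 (\<lambda>m. of_nat n * seq_shift (n - 1) f m) m = of_nat n * seq_shift n f m"
    by (auto simp: seq_shift_def)
  then show ?thesis by (simp add: algebra_simps)
qed

lemma seq_shift_add: "seq_shift k (\<lambda>m. f m + g m) m = seq_shift k f m + seq_shift k g m"
  by (simp add: seq_shift_def)

context Lambda_derivation
begin

lemma cls_beta_pow_Suc: "cls (beta_pow (Suc n)) = cls (beta_pow n) \<otimes>\<^bsub>\<Lambda>\<^esub> cls (beta_pow 1)"
  unfolding beta_pow_Suc[of n] by (rule cls_mult) (simp_all only: generators_closed)

definition beta_pow_coeffs :: "nat \<Rightarrow> nat \<Rightarrow> 'k" where
  "beta_pow_coeffs n m = of_nat n * seq_shift (n - 1) b_coeffs m"

lemma fin_supp_beta_pow_coeffs: "fin_supp (beta_pow_coeffs n)"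
  unfolding beta_pow_coeffs_def by (intro fin_supp_scale fin_supp_shift fin_supp_abc)

lemma D0_beta_pow: "D0 (cls (beta_pow n)) = cls (bpoly False False (beta_pow_coeffs n))"
proof (induction n)
  case 0
  have "beta_pow_coeffs 0 = (\<lambda>_. 0)" by (simp add: beta_pow_coeffs_def[abs_def])
  then show ?case by (simp add: beta_pow_0 D0_E cls_zero)
next
  case (Suc n)
  have "D0 (cls (beta_pow (Suc n))) =
      D0 (cls (beta_pow n)) \<otimes>\<^bsub>\<Lambda>\<^esub> cls (beta_pow 1) \<oplus>\<^bsub>\<Lambda>\<^esub> cls (beta_pow n) \<otimes>\<^bsub>\<Lambda>\<^esub> D0 (cls (beta_pow 1))"
    unfolding cls_beta_pow_Suc by (rule \<Lambda>.derivation_mult[OF ring_derivation_D0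
        generators_cls_closed(4,4)])
  also have "\<dots> = cls (pa_add (pa_mult (bpoly False False (beta_pow_coeffs n)) (beta_pow 1))
                        (pa_mult (beta_pow n) (bpoly False False b_coeffs)))"
    using Suc D0_beta fin_supp_beta_pow_coeffs fin_supp_abc
    by (simp add: cls_mult cls_add bpoly_closed generators_closed pa_mult_closed)
  also have "pa_add (pa_mult (bpoly False False (beta_pow_coeffs n)) (beta_pow 1))
                (pa_mult (beta_pow n) (bpoly False False b_coeffs)) =
             bpoly False False (\<lambda>m. seq_shift 1 (beta_pow_coeffs n) m + seq_shift n b_coeffs m)"
    by (simp add: beta_pow_def bpoly_mult_std std_mult_bpoly bpoly_add)
  also have "(\<lambda>m. seq_shift 1 (beta_pow_coeffs n) m + seq_shift n b_coeffs m)
      = beta_pow_coeffs (Suc n)"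
    by (rule ext) (simp only: beta_pow_coeffs_def[abs_def] seq_shift_power_rule diff_Suc_1)
  finally show ?case .
qed

definition abg_coeffs :: "nat \<Rightarrow> nat \<Rightarrow> 'k" where
  "abg_coeffs n m = seq_shift n a_coeffs m + beta_pow_coeffs n m + seq_shift n c_coeffs m"

lemma fin_supp_abg_coeffs: "fin_supp (abg_coeffs n)"
  unfolding abg_coeffs_def by (intro fin_supp_add fin_supp_shift fin_supp_beta_pow_coeffs
      fin_supp_abc)

lemma D0_alpha_beta_gamma:
  "D0 (cls (alpha_beta_gamma n)) = cls (bpoly True True (abg_coeffs n))"
proof -
  have "D0 (cls (alpha_beta_gamma n)) = D0 (cls alpha \<otimes>\<^bsub>\<Lambda>\<^esub> cls (beta_pow n) \<otimes>\<^bsub>\<Lambda>\<^esub> cls gamma)"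
    by (simp add: alpha_beta_gamma_eq_pbasis pbasis_std_path_eq_products cls_mult generators_closed
        pa_mult_closed)
  also have "\<dots> = D0 (cls alpha) \<otimes>\<^bsub>\<Lambda>\<^esub> cls (beta_pow n) \<otimes>\<^bsub>\<Lambda>\<^esub> cls gamma
      \<oplus>\<^bsub>\<Lambda>\<^esub> cls alpha \<otimes>\<^bsub>\<Lambda>\<^esub> D0 (cls (beta_pow n)) \<otimes>\<^bsub>\<Lambda>\<^esub> cls gamma
      \<oplus>\<^bsub>\<Lambda>\<^esub> cls alpha \<otimes>\<^bsub>\<Lambda>\<^esub> cls (beta_pow n) \<otimes>\<^bsub>\<Lambda>\<^esub> D0 (cls gamma)"
    by (rule \<Lambda>.derivation_mult3[OF ring_derivation_D0 generators_cls_closed(2,4,3)])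
  also have "\<dots>
      = cls (pa_add (pa_add (pa_mult (pa_mult (bpoly True False a_coeffs) (beta_pow n)) gamma)
                    (pa_mult (pa_mult alpha (bpoly False False (beta_pow_coeffs n))) gamma))
                    (pa_mult (pa_mult alpha (beta_pow n)) (bpoly False True c_coeffs)))"
    using fin_supp_beta_pow_coeffs fin_supp_abc
    by (simp add: D0_alpha D0_beta_pow D0_gamma cls_mult cls_add bpoly_closed generators_closed
        pa_mult_closed pa_add_closed)
  also have "pa_add (pa_add (pa_mult (pa_mult (bpoly True False a_coeffs) (beta_pow n)) gamma)
                    (pa_mult (pa_mult alpha (bpoly False False (beta_pow_coeffs n))) gamma))
                    (pa_mult (pa_mult alpha (beta_pow n)) (bpoly False True c_coeffs)) =
             bpoly True True (abg_coeffs n)"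
    by (simp add: generator_defs bpoly_mult_std std_mult_bpoly bpoly_add pbasis_mult_std_path
        abg_coeffs_def[abs_def])
  finally show ?thesis .
qed

end

context Lambda_derivation
begin

lemma p_ge_2: "p \<ge> 2"
proof -
  have "p \<noteq> 1" using char_p CHAR_not_1[where 'a='k] by auto
  then show ?thesis using p_pos by linarith
qed

lemma of_nat_p: "of_nat p = (0::'k)"
  using of_nat_CHAR[where 'a='k] char_p by simp

lemma D0_I: "x \<in> I \<Longrightarrow> D0 (cls x) = \<zero>\<^bsub>\<Lambda>\<^esub>"
  by (simp add: cls_I \<Lambda>.derivation_zero[OF ring_derivation_D0])

lemma D0_I_bpoly:
  assumes "x \<in> I" "D0 (cls x) = cls (bpoly l r f)" "fin_supp f"
  shows "bpoly l r f \<in> I"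
proof -
  have "cls (bpoly l r f) = \<zero>\<^bsub>\<Lambda>\<^esub>" using assms(1,2) D0_I by simp
  then show ?thesis using cls_eq_zero_iff bpoly_closed[OF assms(3)] by blast
qed

text \<open>Since (6p+1) \<beta>^(6p) = \<beta>^(6p) in k, applying D0 to \<beta>^(6p+1) \<in> I shows b(0) = 0.\<close>

lemma b_coeffs_0: "b_coeffs 0 = 0"
proof -
  define N where "N = 6*p+1"
  have "beta_pow N \<in> I"
    using Igens_subset_I[of p] unfolding Igens_def betapow_eq_pbasis_6p1 N_def beta_pow_def by blast
  then have "bpoly False False (beta_pow_coeffs N) \<in> I"
    using D0_beta_pow fin_supp_beta_pow_coeffs by (rule D0_I_bpoly)
  then have "beta_pow_coeffs N (N - 1) = 0"
    by (rule bpoly_in_I_low_zero[OF p_pos]) (simp_all add: N_def)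
  then show ?thesis
    by (simp add: beta_pow_coeffs_def seq_shift_def N_def of_nat_p)
qed

lemma abg_coeffs_in_V: "x \<in> I \<Longrightarrow> D0 (cls x) = cls (bpoly True True w) \<Longrightarrow> fin_supp w \<Longrightarrow> in_V p w"
  using D0_I_bpoly bpoly_in_I_in_V[OF p_pos] by blast

definition s_coeffs :: "nat \<Rightarrow> 'k" where
  "s_coeffs m = a_coeffs m + c_coeffs m"

lemma in_V_s_coeffs: "in_V p s_coeffs"
proof -
  have "alpha_beta_gamma 0 \<in> I" using Igens_subset_I[of p] unfolding Igens_def by blast
  then have "in_V p (abg_coeffs 0)"
    using D0_alpha_beta_gamma fin_supp_abg_coeffs by (rule abg_coeffs_in_V)
  moreover have "abg_coeffs 0 = s_coeffs"
    by (rule ext) (simp add: abg_coeffs_def beta_pow_coeffs_def s_coeffs_def)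
  ultimately show ?thesis by simp
qed

lemma in_V_generator_1_2:
  "in_V p (\<lambda>m. seq_shift 1 s_coeffs m + b_coeffs m + seq_shift 2 s_coeffs m + 2 * seq_shift 1 b_coeffs m)"
proof -
  let ?x = "pa_add (alpha_beta_gamma 1) (alpha_beta_gamma 2)"
  have "?x \<in> I" using Igens_subset_I[of p] unfolding Igens_def by blast
  moreover have "D0 (cls ?x) = cls (bpoly True True (\<lambda>m. abg_coeffs 1 m + abg_coeffs 2 m))"
  proof -
    have abg: "alpha_beta_gamma n \<in> kQ_carrier" for n :: nat
      by (simp add: alpha_beta_gamma_eq_pbasis pbasis_closed valid_std_path)
    have "D0 (cls ?x) = D0 (cls (alpha_beta_gamma 1) \<oplus>\<^bsub>\<Lambda>\<^esub> cls (alpha_beta_gamma 2))"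
      by (simp only: cls_add[OF abg abg])
    also have "\<dots> = D0 (cls (alpha_beta_gamma 1)) \<oplus>\<^bsub>\<Lambda>\<^esub> D0 (cls (alpha_beta_gamma 2))"
      by (rule \<Lambda>.derivation_add[OF ring_derivation_D0 cls_closed[OF abg] cls_closed[OF abg]])
    also have "\<dots> = cls (bpoly True True (\<lambda>m. abg_coeffs 1 m + abg_coeffs 2 m))"
      by (simp add: D0_alpha_beta_gamma cls_add[symmetric] bpoly_closed fin_supp_abg_coeffs
        bpoly_add)
    finally show ?thesis .
  qed
  ultimately have "in_V p (\<lambda>m. abg_coeffs 1 m + abg_coeffs 2 m)"
    by (rule abg_coeffs_in_V) (intro fin_supp_add fin_supp_abg_coeffs)
  moreover have "(\<lambda>m. abg_coeffs 1 m + abg_coeffs 2 m) =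
      (\<lambda>m. seq_shift 1 s_coeffs m + b_coeffs m + seq_shift 2 s_coeffs m + 2 * seq_shift 1 b_coeffs m)"
    by (rule ext) (simp add: abg_coeffs_def beta_pow_coeffs_def s_coeffs_def[abs_def] seq_shift_add
        algebra_simps)
  ultimately show ?thesis by simp
qed

lemma in_V_generator_2p1:
  "in_V p (\<lambda>m. seq_shift (2*p+1) s_coeffs m + seq_shift (2*p) b_coeffs m)"
proof -
  have "alpha_beta_gamma (2*p+1) \<in> I" using Igens_subset_I[of p] unfolding Igens_def by blast
  then have "in_V p (abg_coeffs (2*p+1))"
    using D0_alpha_beta_gamma fin_supp_abg_coeffs by (rule abg_coeffs_in_V)
  moreover have "abg_coeffs (2*p+1)
      = (\<lambda>m. seq_shift (2*p+1) s_coeffs m + seq_shift (2*p) b_coeffs m)"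
    by (rule ext) (simp add: abg_coeffs_def beta_pow_coeffs_def s_coeffs_def[abs_def] seq_shift_add
        of_nat_p algebra_simps)
  ultimately show ?thesis by simp
qed

lemma b_coeffs_low: "i < 6*p+1 \<Longrightarrow> b_coeffs i = 0"
  by (rule constraints_g_eq_0[OF p_ge_2 b_coeffs_0 in_V_s_coeffs in_V_generator_1_2
    in_V_generator_2p1])

lemma s_coeffs_low: "1 \<le> i \<Longrightarrow> i < 6*p+1 \<Longrightarrow> s_coeffs i = 0"
  by (rule constraints_s_eq_0[OF p_ge_2 b_coeffs_0 in_V_s_coeffs in_V_generator_1_2
    in_V_generator_2p1])

end

definition pa_commutator :: "(qpath \<Rightarrow> 'k::field) \<Rightarrow> (qpath \<Rightarrow> 'k) \<Rightarrow> qpath \<Rightarrow> 'k" where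
  "pa_commutator y g = pa_add (pa_mult y g) (\<lambda>q. - pa_mult g y q)"

lemma e3_mult_pbasis_std_path: "pa_mult (idem V3) (pbasis (std_path l n r)) = (\<lambda>_. 0)"
  unfolding idem_def pbasis_std_path by (rule e3_mult_bpoly)

lemma pbasis_std_path_mult_e3:
  "pa_mult (pbasis (std_path l n r)) (idem V3) = (if r then pbasis (std_path l n r) else (\<lambda>_. 0))"
  unfolding idem_def pbasis_std_path by (rule bpoly_mult_e3)

context Lambda_derivation
begin

text \<open>On the generators, D0 is the inner derivation of the class of Y = -a(\<beta>) - s(0) e_3:
  [Y, \<alpha>] = \<alpha> a(\<beta>), [Y, \<beta>] = 0 and [Y, \<gamma>] = (s(0) - a(\<beta>)) \<gamma>, which agree with D0 modulo I
  because b and s - s(0) vanish below degree 6p+1.\<close>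

definition Y :: "qpath \<Rightarrow> 'k" where
  "Y = pa_add (bpoly False False (\<lambda>m. - a_coeffs m)) (pa_smult (- s_coeffs 0) (idem V3))"

lemma Y_closed: "Y \<in> kQ_carrier"
  unfolding Y_def
  by (intro pa_add_closed bpoly_closed fin_supp_neg fin_supp_abc pa_smult_closed generators_closed)

lemma cls_commutator_Y:
  "g \<in> kQ_carrier \<Longrightarrow> cls Y \<otimes>\<^bsub>\<Lambda>\<^esub> cls g \<ominus>\<^bsub>\<Lambda>\<^esub> cls g \<otimes>\<^bsub>\<Lambda>\<^esub> cls Y = cls (pa_commutator Y g)"
  by (simp add: pa_commutator_def cls_diff[symmetric] cls_mult[symmetric] Y_closed pa_mult_closed)

lemma Y_mult: "pa_mult Y g =
    pa_add (pa_mult (bpoly False False (\<lambda>m. - a_coeffs m)) g) (pa_smult (- s_coeffs 0) (pa_mult (idem V3) g))"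
  by (simp add: Y_def pa_mult_add_left pa_mult_smult_left)

lemma mult_Y: "pa_mult g Y =
    pa_add (pa_mult g (bpoly False False (\<lambda>m. - a_coeffs m))) (pa_smult (- s_coeffs 0) (pa_mult g (idem V3)))"
  by (simp add: Y_def pa_mult_add_right pa_mult_smult_right)

lemma commutator_Y_idem: "pa_commutator Y (idem v) = (\<lambda>_. 0)"
proof (cases v)
  case V1
  show ?thesis unfolding pa_commutator_def Y_mult mult_Y V1
    by (rule ext) (simp add: idem_mult e1_mult_bpoly bpoly_mult_e1[folded idem_def]
        e1_mult_bpoly[folded idem_def] pa_add_def pa_smult_def)
next
  case V2
  show ?thesis unfolding pa_commutator_def Y_mult mult_Y V2 beta_pow_0[symmetric] beta_pow_def
    by (rule ext) (simp add: std_mult_bpoly bpoly_mult_std e3_mult_pbasis_std_path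
        pbasis_std_path_mult_e3 pa_add_def pa_smult_def)
next
  case V3
  show ?thesis unfolding pa_commutator_def Y_mult mult_Y V3
    by (rule ext) (simp add: idem_mult bpoly_mult_e3[folded idem_def] e3_mult_bpoly[folded idem_def]
        pa_add_def pa_smult_def)
qed

lemma commutator_Y_alpha: "pa_commutator Y alpha = bpoly True False a_coeffs"
  unfolding pa_commutator_def Y_mult mult_Y alpha_def
  by (rule ext) (simp add: bpoly_mult_std_alpha std_mult_bpoly e3_mult_pbasis_std_path
      pbasis_std_path_mult_e3 pa_add_def pa_smult_def bpoly_def split: option.splits)

lemma commutator_Y_beta: "pa_commutator Y (beta_pow 1) = (\<lambda>_. 0)"
  unfolding pa_commutator_def Y_mult mult_Y beta_pow_def
  by (rule ext) (simp add: bpoly_mult_std std_mult_bpoly e3_mult_pbasis_std_path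
      pbasis_std_path_mult_e3 pa_add_def pa_smult_def)

lemma commutator_Y_gamma:
  "pa_commutator Y gamma = bpoly False True (\<lambda>m. - a_coeffs m + s_coeffs 0 * kdelta 0 m)"
  apply (simp only: pa_commutator_def Y_mult mult_Y gamma_def bpoly_mult_std std_gamma_mult_bpoly
      e3_mult_pbasis_std_path pbasis_std_path_mult_e3 if_False if_True seq_shift_0)
  apply (simp only: pbasis_std_path)
  apply (rule ext)
  apply (simp add: pa_add_def pa_smult_def bpoly_def split: option.splits)
  done

lemma D0_eq_inner_on_generators:
  "D0 (E v) = cls Y \<otimes>\<^bsub>\<Lambda>\<^esub> E v \<ominus>\<^bsub>\<Lambda>\<^esub> E v \<otimes>\<^bsub>\<Lambda>\<^esub> cls Y"
  "D0 (cls alpha) = cls Y \<otimes>\<^bsub>\<Lambda>\<^esub> cls alpha \<ominus>\<^bsub>\<Lambda>\<^esub> cls alpha \<otimes>\<^bsub>\<Lambda>\<^esub> cls Y"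
  "D0 (cls (beta_pow 1)) = cls Y \<otimes>\<^bsub>\<Lambda>\<^esub> cls (beta_pow 1) \<ominus>\<^bsub>\<Lambda>\<^esub> cls (beta_pow 1) \<otimes>\<^bsub>\<Lambda>\<^esub> cls Y"
  "D0 (cls gamma) = cls Y \<otimes>\<^bsub>\<Lambda>\<^esub> cls gamma \<ominus>\<^bsub>\<Lambda>\<^esub> cls gamma \<otimes>\<^bsub>\<Lambda>\<^esub> cls Y"
proof -
  show "D0 (E v) = cls Y \<otimes>\<^bsub>\<Lambda>\<^esub> E v \<ominus>\<^bsub>\<Lambda>\<^esub> E v \<otimes>\<^bsub>\<Lambda>\<^esub> cls Y"
    by (simp add: cls_commutator_Y generators_closed commutator_Y_idem D0_E cls_zero)
  show "D0 (cls alpha) = cls Y \<otimes>\<^bsub>\<Lambda>\<^esub> cls alpha \<ominus>\<^bsub>\<Lambda>\<^esub> cls alpha \<otimes>\<^bsub>\<Lambda>\<^esub> cls Y"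
    by (simp add: cls_commutator_Y generators_closed commutator_Y_alpha D0_alpha)
  have "bpoly False False b_coeffs \<in> I"
    by (rule bpoly_in_I_if_low_zero) (simp_all add: fin_supp_abc b_coeffs_low)
  then show "D0 (cls (beta_pow 1)) =
      cls Y \<otimes>\<^bsub>\<Lambda>\<^esub> cls (beta_pow 1) \<ominus>\<^bsub>\<Lambda>\<^esub> cls (beta_pow 1) \<otimes>\<^bsub>\<Lambda>\<^esub> cls Y"
    unfolding cls_commutator_Y[OF generators_closed(4)] commutator_Y_beta D0_beta
    by (simp add: cls_I cls_zero)
  have fin: "fin_supp (\<lambda>m. - a_coeffs m + s_coeffs 0 * kdelta 0 m)"
    by (intro fin_supp_add fin_supp_neg fin_supp_abc fin_supp_scale fin_supp_kdelta)
  have "pa_add (bpoly False True c_coeffs)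
          (\<lambda>q. - bpoly False True (\<lambda>m. - a_coeffs m + s_coeffs 0 * kdelta 0 m) q) =
        bpoly False True (\<lambda>m. s_coeffs m - s_coeffs 0 * kdelta 0 m)"
    by (rule ext) (simp add: pa_add_def bpoly_def s_coeffs_def split: option.splits)
  also have "\<dots> \<in> I"
  proof (rule bpoly_in_I_if_low_zero)
    have "fin_supp s_coeffs"
      unfolding s_coeffs_def[abs_def] by (intro fin_supp_add fin_supp_abc)
    then show "fin_supp (\<lambda>m. s_coeffs m - s_coeffs 0 * kdelta 0 m)"
      using fin_supp_add[OF _ fin_supp_neg[OF fin_supp_scale[OF fin_supp_kdelta]]] by simp
  qed (auto simp: kdelta_def s_coeffs_low)
  finally have "cls (bpoly False True c_coeffs) =
      cls (bpoly False True (\<lambda>m. - a_coeffs m + s_coeffs 0 * kdelta 0 m))"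
    by (rule cls_eqI[OF bpoly_closed[OF fin_supp_abc(3)] bpoly_closed[OF fin]])
  then show "D0 (cls gamma) = cls Y \<otimes>\<^bsub>\<Lambda>\<^esub> cls gamma \<ominus>\<^bsub>\<Lambda>\<^esub> cls gamma \<otimes>\<^bsub>\<Lambda>\<^esub> cls Y"
    by (simp add: cls_commutator_Y generators_closed commutator_Y_gamma D0_gamma)
qed

end

context Lambda_derivation
begin

lemma derivation_vanishes_on_paths:
  assumes F: "ring_derivation \<Lambda> F"
    and E: "\<And>v. F (E v) = \<zero>\<^bsub>\<Lambda>\<^esub>" and alpha: "F (cls alpha) = \<zero>\<^bsub>\<Lambda>\<^esub>"
    and beta: "F (cls (beta_pow 1)) = \<zero>\<^bsub>\<Lambda>\<^esub>" and gamma: "F (cls gamma) = \<zero>\<^bsub>\<Lambda>\<^esub>"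
    and q: "valid_path q"
  shows "F (cls (pbasis q)) = \<zero>\<^bsub>\<Lambda>\<^esub>"
proof -
  note mult = \<Lambda>.derivation_mult_eq_zero[OF F]
  have beta_pow: "F (cls (beta_pow n)) = \<zero>\<^bsub>\<Lambda>\<^esub>" for n
  proof (induction n)
    case (Suc n)
    then show ?case
      unfolding cls_beta_pow_Suc by (rule mult[OF generators_cls_closed(4,4) _ beta])
  qed (simp add: beta_pow_0 E)
  from q show ?thesis
  proof (cases rule: valid_path_cases)
    case (std l n r)
    then show ?thesis
      by (cases l; cases r)
         (simp_all add: pbasis_std_path_eq_products cls_mult generators_closed pa_mult_closed
           mult generators_cls_closed alpha beta_pow gamma)
  qed (use E in \<open>simp_all add: idem_def\<close>)
qed

lemma derivation_vanishes_if_paths: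
  assumes F: "ring_derivation \<Lambda> F"
    and scalars: "\<And>c. F (Lscalar p c) = \<zero>\<^bsub>\<Lambda>\<^esub>"
    and paths: "\<And>q. valid_path q \<Longrightarrow> F (cls (pbasis q)) = \<zero>\<^bsub>\<Lambda>\<^esub>"
    and a: "a \<in> carrier \<Lambda>"
  shows "F a = \<zero>\<^bsub>\<Lambda>\<^esub>"
proof -
  have "F (cls x) = \<zero>\<^bsub>\<Lambda>\<^esub>" if "x \<in> kQ_carrier" for x
    using that
  proof (induction rule: carrier_induct)
    case zero
    show ?case by (simp add: cls_zero \<Lambda>.derivation_zero[OF F])
  next
    case (add_basis y q c)
    have q: "pbasis q \<in> kQ_carrier" using \<open>valid_path q\<close> by (rule pbasis_closed)
    have "F (cls (pa_add y (pa_smult c (pbasis q)))) =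
        F (cls y \<oplus>\<^bsub>\<Lambda>\<^esub> Lscalar p c \<otimes>\<^bsub>\<Lambda>\<^esub> cls (pbasis q))"
      by (simp only: cls_add[OF add_basis.hyps(1) pa_smult_closed[OF q]] cls_smult[OF q])
    also have "\<dots> = F (cls y) \<oplus>\<^bsub>\<Lambda>\<^esub> F (Lscalar p c \<otimes>\<^bsub>\<Lambda>\<^esub> cls (pbasis q))"
      by (rule \<Lambda>.derivation_add[OF F cls_closed[OF add_basis.hyps(1)]
            \<Lambda>.m_closed[OF Lscalar_closed cls_closed[OF q]]])
    also have "\<dots> = \<zero>\<^bsub>\<Lambda>\<^esub>"
      using \<Lambda>.derivation_mult_eq_zero[OF F Lscalar_closed cls_closed[OF q] scalars
          paths[OF \<open>valid_path q\<close>]] add_basis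
      by simp
    finally show ?case .
  qed
  then show ?thesis using a cls_surj by blast
qed

definition y_inner :: "(qpath \<Rightarrow> 'k) set" where
  "y_inner = y_idem \<oplus>\<^bsub>\<Lambda>\<^esub> cls Y"

lemma y_inner_closed: "y_inner \<in> carrier \<Lambda>"
  by (simp add: y_inner_def y_idem_closed cls_closed Y_closed)

lemma D_eq_inner_if_D0:
  assumes x: "x \<in> carrier \<Lambda>" and D0x: "D0 x = cls Y \<otimes>\<^bsub>\<Lambda>\<^esub> x \<ominus>\<^bsub>\<Lambda>\<^esub> x \<otimes>\<^bsub>\<Lambda>\<^esub> cls Y"
  shows "D x = y_inner \<otimes>\<^bsub>\<Lambda>\<^esub> x \<ominus>\<^bsub>\<Lambda>\<^esub> x \<otimes>\<^bsub>\<Lambda>\<^esub> y_inner"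
proof -
  have Y: "cls Y \<in> carrier \<Lambda>" by (simp add: cls_closed Y_closed)
  have "D x = D0 x \<oplus>\<^bsub>\<Lambda>\<^esub> (y_idem \<otimes>\<^bsub>\<Lambda>\<^esub> x \<ominus>\<^bsub>\<Lambda>\<^esub> x \<otimes>\<^bsub>\<Lambda>\<^esub> y_idem)"
    using x y_idem_closed D_closed[OF x]
    by (simp add: D0_def \<Lambda>.minus_eq \<Lambda>.a_assoc \<Lambda>.l_neg)
  then show ?thesis
    using x y_idem_closed Y
    by (simp add: D0x y_inner_def \<Lambda>.inner_derivation_add \<Lambda>.a_comm)
qed

lemma is_inner_derivation_D: "is_inner_derivation \<Lambda> D"
proof -
  define F where "F x = D x \<ominus>\<^bsub>\<Lambda>\<^esub> (y_inner \<otimes>\<^bsub>\<Lambda>\<^esub> x \<ominus>\<^bsub>\<Lambda>\<^esub> x \<otimes>\<^bsub>\<Lambda>\<^esub> y_inner)" for x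
  have F: "ring_derivation \<Lambda> F"
    unfolding F_def by (rule \<Lambda>.derivation_diff[OF ring_derivation_D \<Lambda>.inner_derivation[OF
        y_inner_closed]])
  have F_zero: "F x = \<zero>\<^bsub>\<Lambda>\<^esub>" if "x \<in> carrier \<Lambda>"
    "D x = y_inner \<otimes>\<^bsub>\<Lambda>\<^esub> x \<ominus>\<^bsub>\<Lambda>\<^esub> x \<otimes>\<^bsub>\<Lambda>\<^esub> y_inner" for x
    using that y_inner_closed by (simp add: F_def)
  have "D (Lscalar p c) = \<zero>\<^bsub>\<Lambda>\<^esub>" for c
    using D_Lscalar[of "\<one>\<^bsub>\<Lambda>\<^esub>" c] \<Lambda>.derivation_one[OF ring_derivation_D] Lscalar_closed
    by simp
  then have scalars: "F (Lscalar p c) = \<zero>\<^bsub>\<Lambda>\<^esub>" for c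
    using Lscalar_central[OF y_inner_closed, of c] Lscalar_closed y_inner_closed
    by (simp add: F_def \<Lambda>.minus_eq \<Lambda>.r_neg)
  have "F x = \<zero>\<^bsub>\<Lambda>\<^esub>" if "x \<in> carrier \<Lambda>" for x
    by (rule derivation_vanishes_if_paths[OF F scalars derivation_vanishes_on_paths[OF F] that])
       (intro F_zero D_eq_inner_if_D0 generators_cls_closed D0_eq_inner_on_generators)+
  then show ?thesis
    unfolding is_inner_derivation_def using y_inner_closed D_closed
    by (auto simp: F_def)
qed

end

theorem mainTheorem19:
  fixes p :: nat
  assumes "CHAR('k::field) = p" and "p > 0"
  shows "admissible (Iideal p :: (qpath \<Rightarrow> 'k) set)
         \<and> HH1_vanishes (Lambda p :: (qpath \<Rightarrow> 'k) set ring) (Lscalar p)"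
proof
  show "admissible (Iideal p :: (qpath \<Rightarrow> 'k) set)"
    using assms(2) by (rule admissible_Iideal)
  show "HH1_vanishes (Lambda p :: (qpath \<Rightarrow> 'k) set ring) (Lscalar p)"
    unfolding HH1_vanishes_def
  proof (intro allI impI)
    fix D :: "(qpath \<Rightarrow> 'k) set \<Rightarrow> (qpath \<Rightarrow> 'k) set"
    assume "is_derivation (Lambda p) (Lscalar p) D"
    then interpret Lambda_derivation p D
      using assms by unfold_locales
    show "is_inner_derivation (Lambda p) D"
      by (rule is_inner_derivation_D)
  qed
qed

end
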